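(* There exist absolute constants $c>0$ and $d_0$ such that for all $d\ge d_0$, all $\kappa$ with $10\le \kappa\le d^4$, and every step size $h>0$, there is a Gaussian density $\pi\propto e^{-f}$ on $\mathbb{R}^d$, with $f$ a quadratic satisfying $I\preceq \nabla^2 f\preceq \kappa I$, such that the relaxation time of the MALA Markov chain with step size $h$ and stationary distribution $\pi$ is at least $c\,\kappa\sqrt d/\sqrt{\log d}$.
   Context: For $f:\mathbb{R}^d\to\mathbb{R}$ differentiable with $\int e^{-f}<\infty$, let $\pi$ denote the probability measure with density proportional to $e^{-f}$. The MALA (Metropolis-adjusted Langevin algorithm) Markov chain with step size $h>0$ is defined as follows: from the current point $x$, propose $y=x-h\nabla f(x)+\sqrt{2h}\,g$ with $g\sim\mathcal N(0,I_d)$; move to $y$ with probability $\min\{1,\exp(f(x)-f(y)+\frac{1}{4h}(\|y-x+h\nabla f(x)\|_2^2-\|x-y+h\nabla f(y)\|_2^2))\}$, and otherwise stay at $x$. This chain is reversible with stationary distribution $\pi$. For a Markov kernel $\{\mathcal T_x\}$ reversible with respect to $\pi$, the Dirichlet form is $\mathcal E(\phi,\phi)=\frac12\iint(\phi(x)-\phi(y))^2\,\mathcal T_x(dy)\,\pi(dx)$, the spectral gap is $\lambda=\inf\{\mathcal E(\phi,\phi)/\mathrm{Var}_\pi(\phi)\}$ over non-constant $\phi\in L^2(\pi)$, and the relaxation time is $1/\lambda$ (infinite if $\lambda=0$). *)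

theory Defs
  imports "HOL-Probability.Probability"
begin

text \<open>Points of R^d are represented as extensional functions nat => real on {..<d};
  Lebesgue measure on R^d is the product of d copies of lborel.\<close>

definition leb :: "nat \<Rightarrow> (nat \<Rightarrow> real) measure" where
  "leb d = PiM {..<d} (\<lambda>_. lborel)"

definition sqnorm :: "nat \<Rightarrow> (nat \<Rightarrow> real) \<Rightarrow> real" where
  "sqnorm d v = (\<Sum>i<d. (v i)\<^sup>2)"

definition quad :: "nat \<Rightarrow> (nat \<Rightarrow> nat \<Rightarrow> real) \<Rightarrow> (nat \<Rightarrow> real) \<Rightarrow> (nat \<Rightarrow> real) \<Rightarrow> real" where
  "quad d A b x = (1/2) * (\<Sum>i<d. \<Sum>j<d. A i j * x i * x j) + (\<Sum>i<d. b i * x i)"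

definition quad_grad :: "nat \<Rightarrow> (nat \<Rightarrow> nat \<Rightarrow> real) \<Rightarrow> (nat \<Rightarrow> real) \<Rightarrow> (nat \<Rightarrow> real) \<Rightarrow> (nat \<Rightarrow> real)" where
  "quad_grad d A b x = (\<lambda>i. if i < d then (\<Sum>j<d. A i j * x j) + b i else undefined)"

definition target :: "nat \<Rightarrow> ((nat \<Rightarrow> real) \<Rightarrow> real) \<Rightarrow> (nat \<Rightarrow> real) measure" where
  "target d f = density (leb d)
     (\<lambda>x. ennreal (exp (- f x) / (\<integral>y. exp (- f y) \<partial>leb d)))"

text \<open>MALA: proposal density of y = x - h grad f(x) + sqrt(2h) g, g ~ N(0,I_d),
  and acceptance probability.\<close>

definition mala_prop :: "nat \<Rightarrow> ((nat \<Rightarrow> real) \<Rightarrow> (nat \<Rightarrow> real)) \<Rightarrow> real \<Rightarrow>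
    (nat \<Rightarrow> real) \<Rightarrow> (nat \<Rightarrow> real) \<Rightarrow> real" where
  "mala_prop d gf h x y =
     (4 * pi * h) powr (- real d / 2) *
     exp (- sqnorm d (\<lambda>i. y i - x i + h * gf x i) / (4 * h))"

definition mala_acc :: "nat \<Rightarrow> ((nat \<Rightarrow> real) \<Rightarrow> real) \<Rightarrow> ((nat \<Rightarrow> real) \<Rightarrow> (nat \<Rightarrow> real)) \<Rightarrow> real \<Rightarrow>
    (nat \<Rightarrow> real) \<Rightarrow> (nat \<Rightarrow> real) \<Rightarrow> real" where
  "mala_acc d f gf h x y =
     min 1 (exp (f x - f y + (1 / (4 * h)) *
        (sqnorm d (\<lambda>i. y i - x i + h * gf x i) - sqnorm d (\<lambda>i. x i - y i + h * gf y i))))"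

text \<open>MALA transition kernel T_x: accepted proposals plus a point mass at x
  carrying the rejection probability.\<close>

definition mala_kernel :: "nat \<Rightarrow> ((nat \<Rightarrow> real) \<Rightarrow> real) \<Rightarrow> ((nat \<Rightarrow> real) \<Rightarrow> (nat \<Rightarrow> real)) \<Rightarrow> real \<Rightarrow>
    (nat \<Rightarrow> real) \<Rightarrow> (nat \<Rightarrow> real) measure" where
  "mala_kernel d f gf h x =
     (let acc = density (leb d) (\<lambda>y. ennreal (mala_prop d gf h x y * mala_acc d f gf h x y))
      in measure_of (space (leb d)) (sets (leb d))
           (\<lambda>A. emeasure acc A + (1 - emeasure acc (space (leb d))) * indicator A x))"

definition dirichlet_form :: "'a measure \<Rightarrow> ('a \<Rightarrow> 'a measure) \<Rightarrow> ('a \<Rightarrow> real) \<Rightarrow> ennreal" where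
  "dirichlet_form M T \<phi> = (1/2) * (\<integral>\<^sup>+ x. (\<integral>\<^sup>+ y. ennreal ((\<phi> x - \<phi> y)\<^sup>2) \<partial>T x) \<partial>M)"

definition var :: "'a measure \<Rightarrow> ('a \<Rightarrow> real) \<Rightarrow> real" where
  "var M \<phi> = (\<integral>x. (\<phi> x - (\<integral>y. \<phi> y \<partial>M))\<^sup>2 \<partial>M)"

definition L2 :: "'a measure \<Rightarrow> ('a \<Rightarrow> real) set" where
  "L2 M = {\<phi>. \<phi> \<in> borel_measurable M \<and> integrable M (\<lambda>x. (\<phi> x)\<^sup>2)}"

text \<open>Non-constant elements of L2(pi) (i.e. not pi-a.e. constant) are those of positive variance.\<close>

definition spectral_gap :: "'a measure \<Rightarrow> ('a \<Rightarrow> 'a measure) \<Rightarrow> ennreal" where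
  "spectral_gap M T = (INF \<phi> \<in> {\<phi> \<in> L2 M. \<not> (\<exists>c. AE x in M. \<phi> x = c)}.
       dirichlet_form M T \<phi> / ennreal (var M \<phi>))"

text \<open>Relaxation time 1/lambda; in ennreal 1/0 = top (infinite).\<close>

definition relaxation_time :: "'a measure \<Rightarrow> ('a \<Rightarrow> 'a measure) \<Rightarrow> ennreal" where
  "relaxation_time M T = 1 / spectral_gap M T"

end

theory Submission
  imports Defs
begin

(*
  Both targets are isotropic Gaussians, the choice depending on the step size h.

  For small steps, h \<le> 60 sqrt (log d) / (\<kappa> sqrt d), take \<pi> = N(0, I) and the test
  function x\<^sub>0: its variance is 1 while its Dirichlet form is at most h + h\<^sup>2/2, because a
  proposal moves x\<^sub>0 by about sqrt (2 h). So the relaxation time is of order 1/h.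

  For large steps take \<pi> = N(0, I/\<kappa>) and the bump \<phi>(x) = exp (- \<kappa> |x|\<^sup>2). The Metropolis
  correction bounds the flux \<pi>(x) p(x,y) \<alpha>(x,y) by the geometric mean of the forward and
  backward proposal fluxes, a Gaussian in (x, y) that factorises over the coordinates.
  Integrating it against \<phi>(x)\<^sup>2 + \<phi>(y)\<^sup>2 bounds the Dirichlet form of \<phi> by
  (5 + 2 (h \<kappa>)\<^sup>2)^(-d/2), while the variance of \<phi> is about 5^(-d/2). Hence the relaxation
  time is at least (1 + 2 (h \<kappa>)\<^sup>2 / 5)^(d/2) / 4, which exceeds d\<^sup>5 as soon as h \<kappa> exceeds
  60 sqrt (log d / d).
*)

lemma min_le_sqrt_mult:
  fixes u v :: real assumes "0 \<le> u" "0 \<le> v"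
  shows "min u v \<le> sqrt (u * v)"
proof (rule real_le_rsqrt)
  show "(min u v)\<^sup>2 \<le> u * v"
    using assms by (cases "u \<le> v") (simp_all add: power2_eq_square mult_left_mono mult_right_mono)
qed

lemma real_sqrt_prod: "sqrt (\<Prod>i\<in>I. f i) = (\<Prod>i\<in>I. sqrt (f i))"
  by (induction I rule: infinite_finite_induct) (auto simp: real_sqrt_mult)

lemma powr_neg_half:
  assumes a: "a > 0"
  shows "a powr (- real d / 2) = (1 / sqrt a) ^ d"
proof -
  have "sqrt a ^ d = a powr (real d / 2)"
    using a by (simp add: powr_realpow[symmetric] powr_half_sqrt[symmetric] powr_powr)
  then show ?thesis
    by (simp add: powr_minus_divide power_one_over)
qed

lemma ennreal_half_mult:
  assumes "0 \<le> x"
  shows "(1/2) * ennreal x = ennreal (x / 2)"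
proof -
  have "ennreal (x / 2) = ennreal x * ennreal (1/2)"
    using assms by (subst ennreal_mult[symmetric]) auto
  also have "ennreal (1/2) = inverse 2"
    by (rule ennreal_half)
  also have "(inverse 2 :: ennreal) = 1/2"
    by (simp add: divide_ennreal_def)
  finally show ?thesis by (simp add: mult.commute)
qed

lemma ln_le_two_sqrt: "x \<ge> 1 \<Longrightarrow> ln x \<le> 2 * sqrt x"
  using ln_le_minus_one[of "sqrt x"] by (simp add: ln_sqrt)

section \<open>Gaussian integrals on the real line\<close>

lemma has_bochner_integral_exp_quadratic:
  fixes a b :: real assumes a: "a > 0"
  shows "has_bochner_integral lborel (\<lambda>x. exp (- a * x\<^sup>2 + b * x)) (sqrt (pi / a) * exp (b\<^sup>2 / (4 * a)))"
proof -
  define C where "C = sqrt (pi / a) * exp (b\<^sup>2 / (4 * a))"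
  have s2: "(1 / sqrt (2 * a))\<^sup>2 = 1 / (2 * a)" using a by (simp add: power_divide)
  have "exp (- a * x\<^sup>2 + b * x) = C * normal_density (b / (2 * a)) (1 / sqrt (2 * a)) x" for x
  proof -
    have "- a * x\<^sup>2 + b * x = b\<^sup>2 / (4 * a) + (- a * (x - b / (2 * a))\<^sup>2)"
      using a by (simp add: field_simps power2_eq_square)
    then have "exp (- a * x\<^sup>2 + b * x) = exp (b\<^sup>2 / (4 * a)) * exp (- a * (x - b / (2 * a))\<^sup>2)"
      by (simp only: exp_add)
    moreover have "normal_density (b / (2 * a)) (1 / sqrt (2 * a)) x = exp (- a * (x - b / (2 * a))\<^sup>2) / sqrt (pi / a)"
      unfolding normal_density_def s2 using a by (simp add: field_simps)
    ultimately show ?thesis unfolding C_def using a by simp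
  qed
  moreover have "has_bochner_integral lborel (\<lambda>x. C * normal_density (b / (2 * a)) (1 / sqrt (2 * a)) x) (C * 1)"
    using a by (intro has_bochner_integral_mult_right) (simp add: has_bochner_integral_iff)
  ultimately show ?thesis unfolding C_def by simp
qed

lemma nn_integral_exp_quadratic:
  fixes a b :: real assumes a: "a > 0"
  shows "(\<integral>\<^sup>+x. ennreal (exp (- a * x\<^sup>2 + b * x)) \<partial>lborel) = ennreal (sqrt (pi / a) * exp (b\<^sup>2 / (4 * a)))"
  using has_bochner_integral_exp_quadratic[OF a, of b]
  by (simp add: nn_integral_eq_integral has_bochner_integral_iff)

lemma nn_integral_exp_quadratic_form:
  fixes \<alpha> \<beta> \<delta> c :: real assumes "\<alpha> > 0" "\<beta> > 0" "\<alpha> * \<beta> > \<delta>\<^sup>2" and c: "c \<ge> 0"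
  shows "(\<integral>\<^sup>+x. \<integral>\<^sup>+y. ennreal (c * exp (- (\<alpha> * x\<^sup>2 + \<beta> * y\<^sup>2 - 2 * \<delta> * x * y))) \<partial>lborel \<partial>lborel)
     = ennreal (c * pi / sqrt (\<alpha> * \<beta> - \<delta>\<^sup>2))"
proof -
  define \<gamma> where "\<gamma> = \<alpha> - \<delta>\<^sup>2 / \<beta>"
  have \<gamma>: "\<gamma> > 0" using assms by (simp add: \<gamma>_def field_simps)
  have inner: "(\<integral>\<^sup>+y. ennreal (c * exp (- (\<alpha> * x\<^sup>2 + \<beta> * y\<^sup>2 - 2 * \<delta> * x * y))) \<partial>lborel)
      = ennreal (c * sqrt (pi / \<beta>)) * ennreal (exp (- \<gamma> * x\<^sup>2 + 0 * x))" for x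
  proof -
    have "(\<integral>\<^sup>+y. ennreal (c * exp (- (\<alpha> * x\<^sup>2 + \<beta> * y\<^sup>2 - 2 * \<delta> * x * y))) \<partial>lborel)
       = (\<integral>\<^sup>+y. ennreal (c * exp (- \<alpha> * x\<^sup>2)) * ennreal (exp (- \<beta> * y\<^sup>2 + (2 * \<delta> * x) * y)) \<partial>lborel)"
      using c by (simp add: ennreal_mult[symmetric] exp_add[symmetric] algebra_simps)
    also have "\<dots> = ennreal (c * exp (- \<alpha> * x\<^sup>2)) * ennreal (sqrt (pi / \<beta>) * exp ((2 * \<delta> * x)\<^sup>2 / (4 * \<beta>)))"
      by (subst nn_integral_cmult, measurable) (simp only: nn_integral_exp_quadratic[OF assms(2)])
    also have "\<dots> = ennreal (c * sqrt (pi / \<beta>)) * ennreal (exp (- \<gamma> * x\<^sup>2 + 0 * x))"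
      using assms by (simp add: \<gamma>_def ennreal_mult[symmetric] exp_add[symmetric] field_simps power2_eq_square)
    finally show ?thesis .
  qed
  have "sqrt (pi / \<beta>) * sqrt (pi / \<gamma>) = sqrt (pi * pi / (\<alpha> * \<beta> - \<delta>\<^sup>2))"
    using assms by (simp add: \<gamma>_def real_sqrt_mult[symmetric] field_simps)
  also have "\<dots> = pi / sqrt (\<alpha> * \<beta> - \<delta>\<^sup>2)"
    by (simp add: real_sqrt_divide)
  finally have "c * sqrt (pi / \<beta>) * sqrt (pi / \<gamma>) = c * pi / sqrt (\<alpha> * \<beta> - \<delta>\<^sup>2)"
    by (simp add: mult.assoc)
  moreover have "(\<integral>\<^sup>+x. ennreal (c * sqrt (pi / \<beta>)) * ennreal (exp (- \<gamma> * x\<^sup>2 + 0 * x)) \<partial>lborel)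
      = ennreal (c * sqrt (pi / \<beta>)) * ennreal (sqrt (pi / \<gamma>) * exp (0\<^sup>2 / (4 * \<gamma>)))"
    by (subst nn_integral_cmult, measurable) (simp only: nn_integral_exp_quadratic[OF \<gamma>])
  ultimately show ?thesis
    unfolding inner using assms \<gamma> by (simp add: ennreal_mult'[symmetric])
qed

lemma nn_integral_normal_density:
  "\<sigma> > 0 \<Longrightarrow> (\<integral>\<^sup>+x. ennreal (normal_density \<mu> \<sigma> x) \<partial>lborel) = 1"
  by (simp add: nn_integral_eq_integral)

lemma has_bochner_integral_normal_density_sq_dist:
  assumes \<sigma>: "\<sigma> > 0"
  shows "has_bochner_integral lborel (\<lambda>x. normal_density \<mu> \<sigma> x * (a - x)\<^sup>2) (\<sigma>\<^sup>2 + (\<mu> - a)\<^sup>2)"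
proof -
  have "has_bochner_integral lborel
      (\<lambda>x. normal_density \<mu> \<sigma> x * (x - \<mu>) ^ (2 * 1) + 2 * (\<mu> - a) * (normal_density \<mu> \<sigma> x * (x - \<mu>) ^ (2 * 0 + 1))
         + (\<mu> - a)\<^sup>2 * normal_density \<mu> \<sigma> x)
     (fact (2 * 1) / ((2 / \<sigma>\<^sup>2) ^ 1 * fact 1) + 2 * (\<mu> - a) * 0 + (\<mu> - a)\<^sup>2 * 1)"
    by (intro has_bochner_integral_add has_bochner_integral_mult_right normal_moment_even normal_moment_odd)
      (use \<sigma> in \<open>simp_all add: has_bochner_integral_iff\<close>)
  moreover have "(\<lambda>x. normal_density \<mu> \<sigma> x * (x - \<mu>) ^ (2 * 1) + 2 * (\<mu> - a) * (normal_density \<mu> \<sigma> x * (x - \<mu>) ^ (2 * 0 + 1))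
         + (\<mu> - a)\<^sup>2 * normal_density \<mu> \<sigma> x) = (\<lambda>x. normal_density \<mu> \<sigma> x * (a - x)\<^sup>2)"
    by (simp add: fun_eq_iff power2_eq_square algebra_simps)
  ultimately show ?thesis using \<sigma> by simp
qed

lemma has_bochner_integral_normal_density_centered_poly:
  assumes \<sigma>: "\<sigma> > 0"
  shows "has_bochner_integral lborel (\<lambda>x. normal_density 0 \<sigma> x * (c + k * x\<^sup>2)) (c + k * \<sigma>\<^sup>2)"
proof -
  have "has_bochner_integral lborel (\<lambda>x. c * normal_density 0 \<sigma> x + k * (normal_density 0 \<sigma> x * (0 - x)\<^sup>2))
      (c * 1 + k * (\<sigma>\<^sup>2 + (0 - 0)\<^sup>2))"
    by (intro has_bochner_integral_add has_bochner_integral_mult_right has_bochner_integral_normal_density_sq_dist \<sigma>)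
      (use \<sigma> in \<open>simp add: has_bochner_integral_iff\<close>)
  then show ?thesis by (simp add: algebra_simps)
qed

lemma normal_density_centered:
  assumes l: "l > 0"
  shows "normal_density 0 (1 / sqrt l) z = exp (- (l / 2) * z\<^sup>2) / sqrt (2 * pi / l)"
  using l by (simp add: normal_density_def power_divide)

lemma has_bochner_integral_normal_density_exp:
  assumes l: "l > 0" and k: "k \<ge> 0"
  shows "has_bochner_integral lborel (\<lambda>z. normal_density 0 (1 / sqrt l) z * exp (- k * z\<^sup>2)) (sqrt (l / (l + 2 * k)))"
proof -
  have lk: "l / 2 + k > 0" using l k by simp
  have "has_bochner_integral lborel (\<lambda>z. (1 / sqrt (2 * pi / l)) * exp (- (l / 2 + k) * z\<^sup>2 + 0 * z))
      ((1 / sqrt (2 * pi / l)) * (sqrt (pi / (l / 2 + k)) * exp (0\<^sup>2 / (4 * (l / 2 + k)))))"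
    by (intro has_bochner_integral_mult_right has_bochner_integral_exp_quadratic lk)
  moreover have "(1 / sqrt (2 * pi / l)) * exp (- (l / 2 + k) * z\<^sup>2 + 0 * z) = normal_density 0 (1 / sqrt l) z * exp (- k * z\<^sup>2)" for z
    unfolding normal_density_centered[OF l] by (simp add: exp_add[symmetric] algebra_simps)
  moreover have "(1 / sqrt (2 * pi / l)) * (sqrt (pi / (l / 2 + k)) * exp (0\<^sup>2 / (4 * (l / 2 + k)))) = sqrt (l / (l + 2 * k))"
  proof -
    have "(pi / (l / 2 + k)) / (2 * pi / l) = (pi * l) / ((l / 2 + k) * (2 * pi))"
      by (simp add: divide_divide_eq_left divide_divide_eq_right)
    also have "(l / 2 + k) * (2 * pi) = pi * (l + 2 * k)"
      by (simp add: algebra_simps)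
    also have "(pi * l) / (pi * (l + 2 * k)) = l / (l + 2 * k)"
      by simp
    finally have "(pi / (l / 2 + k)) / (2 * pi / l) = l / (l + 2 * k)" .
    then show ?thesis by (simp add: real_sqrt_divide[symmetric])
  qed
  ultimately show ?thesis by simp
qed

section \<open>Lebesgue measure on \<open>\<real>\<^sup>d\<close> as a product measure\<close>

lemma product_sigma_finite_lborel: "product_sigma_finite (\<lambda>_::nat. lborel :: real measure)"
  by (simp add: product_sigma_finite_def lborel.sigma_finite_measure_axioms)

lemma sigma_finite_leb: "sigma_finite_measure (leb d)"
  unfolding leb_def by (rule product_sigma_finite.sigma_finite[OF product_sigma_finite_lborel]) auto

lemma measurable_leb_component: "i \<in> {..<d} \<Longrightarrow> (\<lambda>x. x i) \<in> borel_measurable (leb d)"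
  unfolding leb_def using measurable_component_singleton[of i "{..<d}" "\<lambda>_. lborel"]
  by (simp add: measurable_lborel2)

lemma borel_measurable_sqnorm[measurable]: "sqnorm d \<in> borel_measurable (leb d)"
proof -
  note measurable_leb_component[measurable]
  show ?thesis unfolding sqnorm_def[abs_def] by measurable
qed

lemma sqnorm_nonneg: "0 \<le> sqnorm d v"
  unfolding sqnorm_def by (simp add: sum_nonneg)

lemma exp_neg_sqnorm: "exp (- (c * sqnorm d x)) = (\<Prod>i<d. exp (- c * (x i)\<^sup>2))"
  unfolding sqnorm_def by (simp add: sum_distrib_left exp_sum[symmetric] sum_negf)

lemma sets_leb_singleton: "x \<in> space (leb d) \<Longrightarrow> {x} \<in> sets (leb d)"
proof -
  assume x: "x \<in> space (leb d)"
  then have "{x} = (\<Pi>\<^sub>E i\<in>{..<d}. {x i})"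
    by (auto simp: leb_def space_PiM PiE_def extensional_def Pi_def fun_eq_iff) metis
  also have "\<dots> \<in> sets (leb d)"
    unfolding leb_def by (rule sets_PiM_I_finite) auto
  finally show ?thesis .
qed

lemma nn_integral_leb_prod:
  assumes "\<And>i. i < d \<Longrightarrow> F i \<in> borel_measurable lborel"
  shows "(\<integral>\<^sup>+x. (\<Prod>i<d. F i (x i)) \<partial>leb d) = (\<Prod>i<d. \<integral>\<^sup>+y. F i y \<partial>lborel)"
  unfolding leb_def using assms
  by (intro product_sigma_finite.product_nn_integral_prod[OF product_sigma_finite_lborel]) auto

lemma has_bochner_integral_leb_prod:
  fixes F :: "nat \<Rightarrow> real \<Rightarrow> real"
  assumes "\<And>i. i < d \<Longrightarrow> has_bochner_integral lborel (F i) (v i)"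
  shows "has_bochner_integral (leb d) (\<lambda>x. \<Prod>i<d. F i (x i)) (\<Prod>i<d. v i)"
proof -
  interpret product_sigma_finite "\<lambda>_::nat. lborel :: real measure" by (rule product_sigma_finite_lborel)
  have int: "integrable lborel (F i)" and val: "integral\<^sup>L lborel (F i) = v i" if "i \<in> {..<d}" for i
    using assms that by (auto simp: has_bochner_integral_iff)
  have "integrable (leb d) (\<lambda>x. \<Prod>i<d. F i (x i))"
    unfolding leb_def by (rule product_integrable_prod) (auto intro: int)
  moreover have "(\<integral>x. (\<Prod>i<d. F i (x i)) \<partial>leb d) = (\<Prod>i<d. v i)"
    unfolding leb_def by (subst product_integral_prod) (auto intro: int simp: val)
  ultimately show ?thesis by (simp add: has_bochner_integral_iff)
qed

lemma borel_measurable_leb_prod2: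
  assumes "\<And>i. i < d \<Longrightarrow> (\<lambda>(a, b). F i a b) \<in> borel_measurable borel"
  shows "(\<lambda>(x, y). \<Prod>i<d. F i (x i) (y i) :: ennreal) \<in> borel_measurable (leb d \<Otimes>\<^sub>M leb d)"
proof -
  have "(\<lambda>p. F i (fst p i) (snd p i)) \<in> borel_measurable (leb d \<Otimes>\<^sub>M leb d)" if i: "i < d" for i
  proof -
    note measurable_leb_component[measurable]
    have "(\<lambda>p. (fst p i, snd p i)) \<in> borel_measurable (leb d \<Otimes>\<^sub>M leb d)"
      using i by (simp add: borel_prod[symmetric])
    from measurable_compose[OF this assms[OF i]] show ?thesis by simp
  qed
  then show ?thesis by (simp add: case_prod_beta')
qed

lemma nn_integral_leb_prod2:
  fixes F :: "nat \<Rightarrow> real \<Rightarrow> real \<Rightarrow> ennreal"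
  assumes "\<And>i. i < d \<Longrightarrow> (\<lambda>(a, b). F i a b) \<in> borel_measurable borel"
  shows "(\<integral>\<^sup>+x. \<integral>\<^sup>+y. (\<Prod>i<d. F i (x i) (y i)) \<partial>leb d \<partial>leb d)
       = (\<Prod>i<d. \<integral>\<^sup>+a. \<integral>\<^sup>+b. F i a b \<partial>lborel \<partial>lborel)"
proof -
  have pm: "(\<lambda>(a, b). F i a b) \<in> borel_measurable (lborel \<Otimes>\<^sub>M lborel)" if "i < d" for i
    unfolding lborel_prod using assms[OF that] by (simp add: measurable_lborel1)
  have "(\<integral>\<^sup>+x. \<integral>\<^sup>+y. (\<Prod>i<d. F i (x i) (y i)) \<partial>leb d \<partial>leb d)
      = (\<integral>\<^sup>+x. (\<Prod>i<d. \<integral>\<^sup>+b. F i (x i) b \<partial>lborel) \<partial>leb d)"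
    using measurable_Pair2[OF pm] by (intro nn_integral_cong nn_integral_leb_prod) auto
  also have "\<dots> = (\<Prod>i<d. \<integral>\<^sup>+a. \<integral>\<^sup>+b. F i a b \<partial>lborel \<partial>lborel)"
    using lborel.borel_measurable_nn_integral[OF pm] by (intro nn_integral_leb_prod) auto
  finally show ?thesis .
qed

lemma nn_integral_leb_iterated_add:
  fixes F G :: "(nat \<Rightarrow> real) \<Rightarrow> (nat \<Rightarrow> real) \<Rightarrow> ennreal"
  assumes F: "(\<lambda>(x, y). F x y) \<in> borel_measurable (leb d \<Otimes>\<^sub>M leb d)"
    and G: "(\<lambda>(x, y). G x y) \<in> borel_measurable (leb d \<Otimes>\<^sub>M leb d)"
  shows "(\<integral>\<^sup>+x. \<integral>\<^sup>+y. F x y + G x y \<partial>leb d \<partial>leb d)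
       = (\<integral>\<^sup>+x. \<integral>\<^sup>+y. F x y \<partial>leb d \<partial>leb d) + (\<integral>\<^sup>+x. \<integral>\<^sup>+y. G x y \<partial>leb d \<partial>leb d)"
proof -
  interpret sigma_finite_measure "leb d" by (rule sigma_finite_leb)
  have "(\<integral>\<^sup>+x. \<integral>\<^sup>+y. F x y + G x y \<partial>leb d \<partial>leb d)
      = (\<integral>\<^sup>+x. (\<integral>\<^sup>+y. F x y \<partial>leb d) + (\<integral>\<^sup>+y. G x y \<partial>leb d) \<partial>leb d)"
    using measurable_Pair2[OF F] measurable_Pair2[OF G] by (intro nn_integral_cong nn_integral_add) auto
  also have "\<dots> = (\<integral>\<^sup>+x. \<integral>\<^sup>+y. F x y \<partial>leb d \<partial>leb d) + (\<integral>\<^sup>+x. \<integral>\<^sup>+y. G x y \<partial>leb d \<partial>leb d)"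
    using borel_measurable_nn_integral[OF F] borel_measurable_nn_integral[OF G] by (rule nn_integral_add)
  finally show ?thesis .
qed

section \<open>The MALA kernel and its Dirichlet form\<close>

lemma mala_prop_nonneg: "0 \<le> mala_prop d gf h x y"
  unfolding mala_prop_def by simp

lemma mala_acc_nonneg: "0 \<le> mala_acc d f gf h x y"
  unfolding mala_acc_def by simp

lemma mala_acc_le_one: "mala_acc d f gf h x y \<le> 1"
  unfolding mala_acc_def by simp

lemma sets_mala_kernel: "sets (mala_kernel d f gf h x) = sets (leb d)"
  unfolding mala_kernel_def Let_def by simp

lemma emeasure_mala_kernel:
  assumes B: "B \<in> sets (leb d)"
  shows "emeasure (mala_kernel d f gf h x) B
    = emeasure (density (leb d) (\<lambda>y. ennreal (mala_prop d gf h x y * mala_acc d f gf h x y))) B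
      + (1 - emeasure (density (leb d) (\<lambda>y. ennreal (mala_prop d gf h x y * mala_acc d f gf h x y))) (space (leb d)))
        * indicator B x"
proof -
  define acc where "acc = density (leb d) (\<lambda>y. ennreal (mala_prop d gf h x y * mala_acc d f gf h x y))"
  define \<mu> where "\<mu> = (\<lambda>A. emeasure acc A + (1 - emeasure acc (space (leb d))) * indicator A x)"
  have "countably_additive (sets (leb d)) \<mu>"
  proof (unfold countably_additive_def, intro allI impI)
    fix A :: "nat \<Rightarrow> _"
    assume A: "range A \<subseteq> sets (leb d)" "disjoint_family A" "\<Union> (range A) \<in> sets (leb d)"
    have "(\<Sum>i. \<mu> (A i)) = (\<Sum>i. emeasure acc (A i)) + (\<Sum>i. (1 - emeasure acc (space (leb d))) * indicator (A i) x)"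
      unfolding \<mu>_def by (rule suminf_add[symmetric]) auto
    also have "(\<Sum>i. emeasure acc (A i)) = emeasure acc (\<Union>i. A i)"
      using A by (intro suminf_emeasure) (auto simp: acc_def)
    also have "(\<Sum>i. (1 - emeasure acc (space (leb d))) * indicator (A i) x)
        = (1 - emeasure acc (space (leb d))) * indicator (\<Union>i. A i) x"
      using suminf_indicator[OF A(2), of x] by simp
    finally show "(\<Sum>i. \<mu> (A i)) = \<mu> (\<Union> (range A))" unfolding \<mu>_def by simp
  qed
  moreover have "positive (sets (leb d)) \<mu>"
    unfolding positive_def \<mu>_def by simp
  ultimately have "emeasure (measure_of (space (leb d)) (sets (leb d)) \<mu>) B = \<mu> B"
    using B by (intro emeasure_measure_of_sigma sets.sigma_algebra_axioms)
  then show ?thesis unfolding mala_kernel_def Let_def \<mu>_def acc_def .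
qed

text \<open>Off the current point the kernel is the density of accepted proposals; the rejection
  probability is an atom at \<open>x\<close>.\<close>

lemma density_mala_kernel_off_diagonal:
  assumes x: "x \<in> space (leb d)"
  shows "density (mala_kernel d f gf h x) (indicator (space (leb d) - {x}))
    = density (density (leb d) (\<lambda>y. ennreal (mala_prop d gf h x y * mala_acc d f gf h x y)))
        (indicator (space (leb d) - {x}))"
proof -
  define T where "T = mala_kernel d f gf h x"
  define acc where "acc = density (leb d) (\<lambda>y. ennreal (mala_prop d gf h x y * mala_acc d f gf h x y))"
  define I :: "_ \<Rightarrow> ennreal" where "I = indicator (space (leb d) - {x})"
  have sets: "sets T = sets (leb d)" "sets acc = sets (leb d)"
    unfolding T_def acc_def by (simp_all add: sets_mala_kernel)
  have Ix: "space (leb d) - {x} \<in> sets (leb d)"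
    using sets_leb_singleton[OF x] by auto
  have I: "I \<in> borel_measurable T" "I \<in> borel_measurable acc"
    unfolding I_def using Ix by (simp_all add: measurable_cong_sets[OF sets(1) refl] measurable_cong_sets[OF sets(2) refl])
  have "emeasure (density T I) B = emeasure (density acc I) B" if B: "B \<in> sets (leb d)" for B
  proof -
    have BI: "(space (leb d) - {x}) \<inter> B \<in> sets (leb d)" using B Ix by auto
    have "emeasure (density T I) B = emeasure T ((space (leb d) - {x}) \<inter> B)"
      using B BI I sets by (simp add: emeasure_density I_def indicator_inter_arith[symmetric])
    also have "\<dots> = emeasure acc ((space (leb d) - {x}) \<inter> B)"
      unfolding T_def acc_def emeasure_mala_kernel[OF BI] by simp
    also have "\<dots> = emeasure (density acc I) B"
      using B BI I sets by (simp add: emeasure_density I_def indicator_inter_arith[symmetric])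
    finally show ?thesis .
  qed
  then show ?thesis
    unfolding T_def[symmetric] acc_def[symmetric] I_def[symmetric]
    by (intro measure_eqI) (simp_all add: sets)
qed

lemma nn_integral_mala_kernel:
  fixes g :: "(nat \<Rightarrow> real) \<Rightarrow> ennreal"
  assumes x: "x \<in> space (leb d)"
    and D: "(\<lambda>y. ennreal (mala_prop d gf h x y * mala_acc d f gf h x y)) \<in> borel_measurable (leb d)"
    and g: "g \<in> borel_measurable (leb d)" and gx: "g x = 0"
  shows "(\<integral>\<^sup>+y. g y \<partial>mala_kernel d f gf h x)
       = (\<integral>\<^sup>+y. ennreal (mala_prop d gf h x y * mala_acc d f gf h x y) * g y \<partial>leb d)"
proof -
  define T where "T = mala_kernel d f gf h x"
  define acc where "acc = density (leb d) (\<lambda>y. ennreal (mala_prop d gf h x y * mala_acc d f gf h x y))"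
  define I :: "_ \<Rightarrow> ennreal" where "I = indicator (space (leb d) - {x})"
  have sets: "sets T = sets (leb d)" "sets acc = sets (leb d)"
    unfolding T_def acc_def by (simp_all add: sets_mala_kernel)
  have "space (leb d) - {x} \<in> sets (leb d)"
    using sets_leb_singleton[OF x] by auto
  then have I: "I \<in> borel_measurable T" "I \<in> borel_measurable acc"
    unfolding I_def by (simp_all add: measurable_cong_sets[OF sets(1) refl] measurable_cong_sets[OF sets(2) refl])
  have gT: "g \<in> borel_measurable T" "g \<in> borel_measurable acc"
    using g by (simp_all add: measurable_cong_sets[OF sets(1) refl] measurable_cong_sets[OF sets(2) refl])
  have gI: "g y = I y * g y" if "y \<in> space (leb d)" for y
    using that gx by (cases "y = x") (auto simp: I_def)
  have "(\<integral>\<^sup>+y. g y \<partial>T) = (\<integral>\<^sup>+y. I y * g y \<partial>T)"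
    using gI sets_eq_imp_space_eq[OF sets(1)] by (intro nn_integral_cong) simp
  also have "\<dots> = (\<integral>\<^sup>+y. I y * g y \<partial>acc)"
  proof -
    have "density T I = density acc I"
      unfolding T_def acc_def I_def by (rule density_mala_kernel_off_diagonal[OF x])
    then show ?thesis using gT I by (simp add: nn_integral_density[symmetric])
  qed
  also have "\<dots> = (\<integral>\<^sup>+y. g y \<partial>acc)"
    using gI by (intro nn_integral_cong) (simp add: acc_def)
  also have "\<dots> = (\<integral>\<^sup>+y. ennreal (mala_prop d gf h x y * mala_acc d f gf h x y) * g y \<partial>leb d)"
    unfolding acc_def using D g by (simp add: nn_integral_density)
  finally show ?thesis unfolding T_def .
qed

lemma dirichlet_form_mala:
  fixes f \<phi> :: "(nat \<Rightarrow> real) \<Rightarrow> real"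
  assumes D: "(\<lambda>(x, y). ennreal (mala_prop d gf h x y * mala_acc d f gf h x y)) \<in> borel_measurable (leb d \<Otimes>\<^sub>M leb d)"
    and [measurable]: "\<phi> \<in> borel_measurable (leb d)" "f \<in> borel_measurable (leb d)"
  shows "dirichlet_form (target d f) (mala_kernel d f gf h) \<phi> = (1/2) * (\<integral>\<^sup>+x. \<integral>\<^sup>+y.
      ennreal (exp (- f x) / (\<integral>y. exp (- f y) \<partial>leb d)) *
      (ennreal (mala_prop d gf h x y * mala_acc d f gf h x y) * ennreal ((\<phi> x - \<phi> y)\<^sup>2)) \<partial>leb d \<partial>leb d)"
proof -
  define Z where "Z = (\<integral>y. exp (- f y) \<partial>leb d)"
  define G where "G = (\<lambda>x y. ennreal (mala_prop d gf h x y * mala_acc d f gf h x y) * ennreal ((\<phi> x - \<phi> y)\<^sup>2))"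
  interpret sigma_finite_measure "leb d" by (rule sigma_finite_leb)
  have G: "(\<lambda>(x, y). G x y) \<in> borel_measurable (leb d \<Otimes>\<^sub>M leb d)"
  proof -
    have "(\<lambda>p. ennreal ((\<phi> (fst p) - \<phi> (snd p))\<^sup>2)) \<in> borel_measurable (leb d \<Otimes>\<^sub>M leb d)"
      by measurable
    with D show ?thesis by (simp add: G_def case_prod_beta')
  qed
  have inner: "(\<integral>\<^sup>+y. ennreal ((\<phi> x - \<phi> y)\<^sup>2) \<partial>mala_kernel d f gf h x) = (\<integral>\<^sup>+y. G x y \<partial>leb d)"
    if x: "x \<in> space (leb d)" for x
    unfolding G_def using measurable_Pair2[OF D x] by (intro nn_integral_mala_kernel[OF x]) auto
  have "dirichlet_form (target d f) (mala_kernel d f gf h) \<phi>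
      = (1/2) * (\<integral>\<^sup>+x. (\<integral>\<^sup>+y. G x y \<partial>leb d) \<partial>target d f)"
    unfolding dirichlet_form_def
    by (intro arg_cong2[where f="(*)"] refl nn_integral_cong) (simp add: inner target_def)
  also have "\<dots> = (1/2) * (\<integral>\<^sup>+x. ennreal (exp (- f x) / Z) * (\<integral>\<^sup>+y. G x y \<partial>leb d) \<partial>leb d)"
    unfolding target_def Z_def[symmetric] using borel_measurable_nn_integral[OF G]
    by (simp add: nn_integral_density)
  also have "\<dots> = (1/2) * (\<integral>\<^sup>+x. \<integral>\<^sup>+y. ennreal (exp (- f x) / Z) * G x y \<partial>leb d \<partial>leb d)"
    using measurable_Pair2[OF G]
    by (intro arg_cong2[where f="(*)"] refl nn_integral_cong nn_integral_cmult[symmetric]) auto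
  finally show ?thesis unfolding G_def Z_def .
qed

text \<open>The Metropolis correction makes the flux \<open>\<pi>(x) p(x,y) \<alpha>(x,y)\<close> equal to
  \<open>min (\<pi>(x) p(x,y)) (\<pi>(y) p(y,x))\<close>, which is at most the geometric mean.\<close>

lemma mala_flux_le_sqrt:
  assumes Z: "Z > 0" and h: "h > 0"
  shows "(exp (- f x) / Z) * (mala_prop d gf h x y * mala_acc d f gf h x y)
    \<le> sqrt ((exp (- f x) / Z) * mala_prop d gf h x y * ((exp (- f y) / Z) * mala_prop d gf h y x))"
proof -
  define n1 where "n1 = sqnorm d (\<lambda>i. y i - x i + h * gf x i)"
  define n2 where "n2 = sqnorm d (\<lambda>i. x i - y i + h * gf y i)"
  define \<Delta> where "\<Delta> = f x - f y + (1 / (4 * h)) * (n1 - n2)"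
  define u where "u = exp (- f x) / Z * mala_prop d gf h x y"
  define v where "v = exp (- f y) / Z * mala_prop d gf h y x"
  have "exp (- f y) * exp (- n2 / (4 * h)) = exp (- f x) * exp (- n1 / (4 * h)) * exp \<Delta>"
    unfolding \<Delta>_def exp_add[symmetric] using h by (simp add: field_simps)
  then have vu: "v = u * exp \<Delta>"
    unfolding u_def v_def mala_prop_def n1_def[symmetric] n2_def[symmetric] by (simp add: field_simps)
  have u0: "0 \<le> u" unfolding u_def using Z by (simp add: mala_prop_nonneg)
  have "(exp (- f x) / Z) * (mala_prop d gf h x y * mala_acc d f gf h x y) = u * min 1 (exp \<Delta>)"
    unfolding u_def mala_acc_def \<Delta>_def n1_def n2_def by simp
  also have "\<dots> = min u v" unfolding vu using u0 by (simp add: min_mult_distrib_left)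
  also have "\<dots> \<le> sqrt (u * v)" using u0 vu by (intro min_le_sqrt_mult) auto
  finally show ?thesis unfolding u_def v_def by (simp add: mult.assoc)
qed

section \<open>Relaxation time from a test function\<close>

lemma var_eq_moments:
  assumes "prob_space M" "integrable M \<phi>" "integrable M (\<lambda>x. (\<phi> x)\<^sup>2)"
  shows "var M \<phi> = (\<integral>x. (\<phi> x)\<^sup>2 \<partial>M) - (\<integral>x. \<phi> x \<partial>M)\<^sup>2"
proof -
  interpret prob_space M by fact
  define m where "m = (\<integral>x. \<phi> x \<partial>M)"
  have "(\<lambda>x. (\<phi> x - m)\<^sup>2) = (\<lambda>x. ((\<phi> x)\<^sup>2 - 2 * m * \<phi> x) + m\<^sup>2)"
    by (simp add: power2_eq_square algebra_simps)
  then have "var M \<phi> = (\<integral>x. ((\<phi> x)\<^sup>2 - 2 * m * \<phi> x) + m\<^sup>2 \<partial>M)"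
    unfolding var_def m_def by simp
  also have "\<dots> = (\<integral>x. (\<phi> x)\<^sup>2 \<partial>M) - 2 * m * m + m\<^sup>2"
    using assms(2,3) by (simp add: integral_add integral_diff m_def prob_space)
  finally show ?thesis unfolding m_def by (simp add: power2_eq_square)
qed

lemma var_AE_const:
  assumes "prob_space M" "\<phi> \<in> borel_measurable M" "AE x in M. \<phi> x = c"
  shows "var M \<phi> = 0"
proof -
  interpret prob_space M by fact
  have m: "(\<integral>x. \<phi> x \<partial>M) = c"
    using integral_cong_AE[OF assms(2) borel_measurable_const assms(3)] by (simp add: prob_space)
  have "var M \<phi> = (\<integral>x. 0 \<partial>M)"
    unfolding var_def m using assms(2,3) by (intro integral_cong_AE) auto
  then show ?thesis by simp
qed

lemma relaxation_time_ge_test_function: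
  assumes M: "prob_space M" and \<phi>: "\<phi> \<in> L2 M" and v: "var M \<phi> > 0"
    and E: "dirichlet_form M T \<phi> \<le> ennreal e" and e: "e > 0"
  shows "ennreal (var M \<phi> / e) \<le> relaxation_time M T"
proof -
  have "\<not> (\<exists>c. AE x in M. \<phi> x = c)"
    using var_AE_const[OF M] \<phi> v by (force simp: L2_def)
  then have "spectral_gap M T \<le> dirichlet_form M T \<phi> / ennreal (var M \<phi>)"
    unfolding spectral_gap_def using \<phi> by (intro INF_lower) auto
  also have "\<dots> \<le> ennreal e / ennreal (var M \<phi>)"
    using E by (rule divide_right_mono_ennreal)
  also have "\<dots> = ennreal (e / var M \<phi>)"
    using v e by (simp add: divide_ennreal)
  finally have gap: "spectral_gap M T \<le> ennreal (e / var M \<phi>)" .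
  show ?thesis
  proof (cases "spectral_gap M T")
    case (real g)
    show ?thesis
    proof (cases "g = 0")
      case True
      then show ?thesis unfolding relaxation_time_def real by simp
    next
      case False
      then have g: "g > 0" using real by simp
      have "g \<le> e / var M \<phi>" using gap real v e by (simp add: ennreal_le_iff)
      then have "var M \<phi> / e \<le> 1 / g" using g v e by (simp add: field_simps)
      then have "ennreal (var M \<phi> / e) \<le> ennreal (1 / g)" by (rule ennreal_leI)
      also have "\<dots> = 1 / ennreal g" using divide_ennreal[of 1 g] g by simp
      finally show ?thesis unfolding relaxation_time_def real .
    qed
  next
    case top
    then show ?thesis using gap by (simp add: top_unique)
  qed
qed

section \<open>Isotropic Gaussian targets\<close>

definition scalar_matrix :: "real \<Rightarrow> nat \<Rightarrow> nat \<Rightarrow> real" where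
  "scalar_matrix l i j = (if i = j then l else 0)"

abbreviation iso_potential :: "nat \<Rightarrow> real \<Rightarrow> (nat \<Rightarrow> real) \<Rightarrow> real" where
  "iso_potential d l \<equiv> quad d (scalar_matrix l) (\<lambda>_. 0)"

abbreviation iso_gradient :: "nat \<Rightarrow> real \<Rightarrow> (nat \<Rightarrow> real) \<Rightarrow> (nat \<Rightarrow> real)" where
  "iso_gradient d l \<equiv> quad_grad d (scalar_matrix l) (\<lambda>_. 0)"

lemma scalar_matrix_symmetric: "scalar_matrix l i j = scalar_matrix l j i"
  by (simp add: scalar_matrix_def)

lemma quadratic_form_scalar_matrix: "(\<Sum>i<d. \<Sum>j<d. scalar_matrix l i j * v i * v j) = l * sqnorm d v"
proof -
  have "scalar_matrix l i j * v i * v j = (if i = j then l * v i * v j else 0)" for i j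
    by (simp add: scalar_matrix_def)
  then show ?thesis by (simp add: sqnorm_def sum_distrib_left power2_eq_square mult.assoc)
qed

lemma iso_potential_eq: "iso_potential d l = (\<lambda>x. l / 2 * sqnorm d x)"
  by (simp add: fun_eq_iff quad_def quadratic_form_scalar_matrix)

lemma iso_gradient_eq: "iso_gradient d l x = (\<lambda>i. if i < d then l * x i else undefined)"
proof -
  have "scalar_matrix l i j * x j = (if i = j then l * x j else 0)" for i j
    by (simp add: scalar_matrix_def)
  then show ?thesis by (simp add: fun_eq_iff quad_grad_def)
qed

lemma normal_density_mala_proposal:
  assumes h: "h > 0"
  shows "normal_density m (sqrt (2 * h)) z = exp (- (1 / (4 * h)) * (z - m)\<^sup>2) / sqrt (4 * pi * h)"
  using h by (simp add: normal_density_def)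

lemma integral_exp_neg_sqnorm:
  assumes l: "l > 0"
  shows "(\<integral>y. exp (- (l / 2 * sqnorm d y)) \<partial>leb d) = sqrt (2 * pi / l) ^ d"
proof -
  have "has_bochner_integral lborel (\<lambda>z. exp (- (l / 2) * z\<^sup>2 + 0 * z)) (sqrt (pi / (l / 2)) * exp (0\<^sup>2 / (4 * (l / 2))))"
    using l by (intro has_bochner_integral_exp_quadratic) simp
  then have "has_bochner_integral lborel (\<lambda>z. exp (- (l / 2) * z\<^sup>2)) (sqrt (2 * pi / l))"
    by (simp add: ac_simps)
  then have "has_bochner_integral (leb d) (\<lambda>y. \<Prod>i<d. exp (- (l / 2) * (y i)\<^sup>2)) (\<Prod>i<d. sqrt (2 * pi / l))"
    by (intro has_bochner_integral_leb_prod)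
  then show ?thesis
    unfolding exp_neg_sqnorm by (simp add: has_bochner_integral_iff)
qed

lemma iso_target_density:
  assumes l: "l > 0"
  shows "exp (- iso_potential d l x) / (\<integral>y. exp (- iso_potential d l y) \<partial>leb d)
      = (\<Prod>i<d. normal_density 0 (1 / sqrt l) (x i))"
proof -
  have "(\<Prod>i<d. normal_density 0 (1 / sqrt l) (x i)) = (\<Prod>i<d. exp (- (l / 2) * (x i)\<^sup>2)) / (\<Prod>i<d. sqrt (2 * pi / l))"
    by (simp add: normal_density_centered[OF l] prod_dividef)
  also have "\<dots> = exp (- (l / 2 * sqnorm d x)) / sqrt (2 * pi / l) ^ d"
    by (simp only: exp_neg_sqnorm prod_constant card_lessThan)
  finally show ?thesis
    unfolding iso_potential_eq integral_exp_neg_sqnorm[OF l] by simp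
qed

lemma iso_target_eq:
  assumes l: "l > 0"
  shows "target d (iso_potential d l) = density (leb d) (\<lambda>x. ennreal (\<Prod>i<d. normal_density 0 (1 / sqrt l) (x i)))"
  unfolding target_def iso_target_density[OF l] ..

lemma prob_space_iso_target:
  assumes l: "l > 0"
  shows "prob_space (target d (iso_potential d l))"
proof (rule prob_spaceI)
  note measurable_leb_component[measurable]
  have "emeasure (target d (iso_potential d l)) (space (leb d))
      = (\<integral>\<^sup>+x. (\<Prod>i<d. ennreal (normal_density 0 (1 / sqrt l) (x i))) \<partial>leb d)"
    unfolding iso_target_eq[OF l]
    by (subst emeasure_density) (auto simp: prod_ennreal intro!: nn_integral_cong)
  also have "\<dots> = (\<Prod>i<d. \<integral>\<^sup>+z. ennreal (normal_density 0 (1 / sqrt l) z) \<partial>lborel)"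
    by (rule nn_integral_leb_prod) simp
  also have "\<dots> = 1"
    using l by (simp add: nn_integral_normal_density)
  finally show "emeasure (target d (iso_potential d l)) (space (target d (iso_potential d l))) = 1"
    by (simp add: target_def)
qed

lemma integral_iso_target:
  assumes l: "l > 0" and \<phi>: "\<phi> \<in> borel_measurable (leb d)"
    and H: "has_bochner_integral (leb d) (\<lambda>x. (\<Prod>i<d. normal_density 0 (1 / sqrt l) (x i)) * \<phi> x) v"
  shows "integrable (target d (iso_potential d l)) \<phi>" "(\<integral>x. \<phi> x \<partial>target d (iso_potential d l)) = v"
proof -
  note measurable_leb_component[measurable]
  have q: "(\<lambda>x. \<Prod>i<d. normal_density 0 (1 / sqrt l) (x i)) \<in> borel_measurable (leb d)"
    by measurable
  have q0: "AE x in leb d. 0 \<le> (\<Prod>i<d. normal_density 0 (1 / sqrt l) (x i))"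
    by (simp add: prod_nonneg)
  show "integrable (target d (iso_potential d l)) \<phi>"
    unfolding iso_target_eq[OF l] using integrable_density[OF \<phi> q q0] H
    by (simp add: has_bochner_integral_iff)
  show "(\<integral>x. \<phi> x \<partial>target d (iso_potential d l)) = v"
    unfolding iso_target_eq[OF l] using integral_density[OF \<phi> q q0] H
    by (simp add: has_bochner_integral_iff)
qed

lemma mala_prop_iso:
  assumes h: "h > 0"
  shows "mala_prop d (iso_gradient d l) h x y
     = (\<Prod>i<d. normal_density ((1 - h * l) * x i) (sqrt (2 * h)) (y i))"
proof -
  have "mala_prop d (iso_gradient d l) h x y
      = (1 / sqrt (4 * pi * h)) ^ d * exp (- (1 / (4 * h) * sqnorm d (\<lambda>i. y i - (1 - h * l) * x i)))"
  proof -
    have "(4 * pi * h) powr (- real d / 2) = (1 / sqrt (4 * pi * h)) ^ d"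
      using h by (intro powr_neg_half) simp
    moreover have "sqnorm d (\<lambda>i. y i - x i + h * iso_gradient d l x i) = sqnorm d (\<lambda>i. y i - (1 - h * l) * x i)"
      unfolding sqnorm_def iso_gradient_eq by (intro sum.cong) (auto simp: algebra_simps)
    ultimately show ?thesis unfolding mala_prop_def by simp
  qed
  then show ?thesis
    unfolding exp_neg_sqnorm normal_density_mala_proposal[OF h] by (simp add: prod_dividef power_one_over)
qed

text \<open>Density of the pair (current state, MALA proposal) in one coordinate of the isotropic
  target \<open>N(0, 1/l)\<close>: the proposal from \<open>a\<close> is \<open>N((1 - h l) a, 2 h)\<close>.\<close>

definition gauss_flux :: "real \<Rightarrow> real \<Rightarrow> real \<Rightarrow> real \<Rightarrow> real" where
  "gauss_flux l h a b = normal_density 0 (1 / sqrt l) a * normal_density ((1 - h * l) * a) (sqrt (2 * h)) b"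

lemma gauss_flux_nonneg: "0 \<le> gauss_flux l h a b"
  unfolding gauss_flux_def by simp

lemma borel_measurable_gauss_flux[measurable]:
  assumes [measurable]: "f \<in> borel_measurable M" "g \<in> borel_measurable M"
  shows "(\<lambda>x. gauss_flux l h (f x) (g x)) \<in> borel_measurable M"
  unfolding gauss_flux_def normal_density_def by measurable

lemma iso_target_mala_prop:
  assumes l: "l > 0" and h: "h > 0"
  shows "exp (- iso_potential d l x) / (\<integral>z. exp (- iso_potential d l z) \<partial>leb d) * mala_prop d (iso_gradient d l) h x y
    = (\<Prod>i<d. gauss_flux l h (x i) (y i))"
  unfolding iso_target_density[OF l] mala_prop_iso[OF h] gauss_flux_def by (simp add: prod.distrib)

lemma mala_acc_iso:
  "mala_acc d (iso_potential d l) (iso_gradient d l) h x y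
    = min 1 (exp (l / 2 * sqnorm d x - l / 2 * sqnorm d y + (1 / (4 * h)) *
      ((\<Sum>i<d. (y i - x i + h * (l * x i))\<^sup>2) - (\<Sum>i<d. (x i - y i + h * (l * y i))\<^sup>2))))"
proof -
  have "sqnorm d (\<lambda>i. u i + h * iso_gradient d l z i) = (\<Sum>i<d. (u i + h * (l * z i))\<^sup>2)" for u z
    unfolding sqnorm_def iso_gradient_eq by (intro sum.cong) auto
  from this[of "\<lambda>i. y i - x i" x] this[of "\<lambda>i. x i - y i" y] show ?thesis
    unfolding mala_acc_def iso_potential_eq by simp
qed

lemma borel_measurable_iso_mala_transition:
  assumes h: "h > 0"
  shows "(\<lambda>(x, y). ennreal (mala_prop d (iso_gradient d l) h x y * mala_acc d (iso_potential d l) (iso_gradient d l) h x y))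
      \<in> borel_measurable (leb d \<Otimes>\<^sub>M leb d)"
proof -
  note measurable_leb_component[measurable]
  have "(\<lambda>p. ennreal (mala_prop d (iso_gradient d l) h (fst p) (snd p) *
          mala_acc d (iso_potential d l) (iso_gradient d l) h (fst p) (snd p))) \<in> borel_measurable (leb d \<Otimes>\<^sub>M leb d)"
    unfolding mala_prop_iso[OF h] mala_acc_iso sqnorm_def normal_density_def by measurable
  then show ?thesis by (simp add: case_prod_beta')
qed

lemma dirichlet_form_iso_le:
  assumes l: "l > 0" and h: "h > 0" and \<phi>: "\<phi> \<in> borel_measurable (leb d)"
    and G: "\<And>x y. (\<Prod>i<d. gauss_flux l h (x i) (y i)) * mala_acc d (iso_potential d l) (iso_gradient d l) h x y
      * (\<phi> x - \<phi> y)\<^sup>2 \<le> G x y"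
  shows "dirichlet_form (target d (iso_potential d l)) (mala_kernel d (iso_potential d l) (iso_gradient d l) h) \<phi>
    \<le> (1/2) * (\<integral>\<^sup>+x. \<integral>\<^sup>+y. ennreal (G x y) \<partial>leb d \<partial>leb d)"
proof -
  have f: "iso_potential d l \<in> borel_measurable (leb d)"
    unfolding iso_potential_eq by measurable
  have "ennreal (exp (- iso_potential d l x) / (\<integral>z. exp (- iso_potential d l z) \<partial>leb d)) *
      (ennreal (mala_prop d (iso_gradient d l) h x y * mala_acc d (iso_potential d l) (iso_gradient d l) h x y)
        * ennreal ((\<phi> x - \<phi> y)\<^sup>2)) \<le> ennreal (G x y)" for x y
  proof -
    define q where "q = exp (- iso_potential d l x) / (\<integral>z. exp (- iso_potential d l z) \<partial>leb d)"
    define P where "P = mala_prop d (iso_gradient d l) h x y"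
    define \<alpha> where "\<alpha> = mala_acc d (iso_potential d l) (iso_gradient d l) h x y"
    have q: "q \<ge> 0"
      unfolding q_def iso_target_density[OF l] by (simp add: prod_nonneg)
    have "ennreal q * (ennreal (P * \<alpha>) * ennreal ((\<phi> x - \<phi> y)\<^sup>2)) = ennreal (q * P * \<alpha> * (\<phi> x - \<phi> y)\<^sup>2)"
      using q mala_prop_nonneg[of d "iso_gradient d l" h x y] mala_acc_nonneg[of d "iso_potential d l" "iso_gradient d l" h x y]
      unfolding P_def \<alpha>_def by (simp add: ennreal_mult[symmetric] mult.assoc)
    also have "q * P = (\<Prod>i<d. gauss_flux l h (x i) (y i))"
      unfolding q_def P_def by (rule iso_target_mala_prop[OF l h])
    finally have "ennreal q * (ennreal (P * \<alpha>) * ennreal ((\<phi> x - \<phi> y)\<^sup>2))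
      = ennreal ((\<Prod>i<d. gauss_flux l h (x i) (y i)) * \<alpha> * (\<phi> x - \<phi> y)\<^sup>2)" .
    then show ?thesis using G unfolding q_def P_def \<alpha>_def by (simp add: ennreal_leI)
  qed
  then show ?thesis
    unfolding dirichlet_form_mala[OF borel_measurable_iso_mala_transition[OF h] \<phi> f]
    by (intro mult_left_mono nn_integral_mono) auto
qed

lemma iso_flux_acc_le_sqrt:
  assumes l: "l > 0" and h: "h > 0"
  shows "(\<Prod>i<d. gauss_flux l h (x i) (y i)) * mala_acc d (iso_potential d l) (iso_gradient d l) h x y
    \<le> (\<Prod>i<d. sqrt (gauss_flux l h (x i) (y i) * gauss_flux l h (y i) (x i)))"
proof -
  define q where "q = (\<lambda>x. exp (- iso_potential d l x) / (\<integral>z. exp (- iso_potential d l z) \<partial>leb d))"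
  have "(\<integral>z. exp (- iso_potential d l z) \<partial>leb d) > 0"
    unfolding iso_potential_eq integral_exp_neg_sqnorm[OF l] using l by simp
  from mala_flux_le_sqrt[OF this h, of "iso_potential d l" x d "iso_gradient d l" y]
  have "q x * mala_prop d (iso_gradient d l) h x y * mala_acc d (iso_potential d l) (iso_gradient d l) h x y
      \<le> sqrt ((q x * mala_prop d (iso_gradient d l) h x y) * (q y * mala_prop d (iso_gradient d l) h y x))"
    unfolding q_def by (simp add: mult.assoc)
  also have "(q x * mala_prop d (iso_gradient d l) h x y) * (q y * mala_prop d (iso_gradient d l) h y x)
      = (\<Prod>i<d. gauss_flux l h (x i) (y i) * gauss_flux l h (y i) (x i))"
    unfolding q_def iso_target_mala_prop[OF l h] by (rule prod.distrib[symmetric])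
  finally show ?thesis
    unfolding q_def iso_target_mala_prop[OF l h] real_sqrt_prod .
qed

section \<open>Small steps: a coordinate as test function\<close>

lemma nn_integral_gauss_flux_sq_dist:
  assumes l: "l > 0" and h: "h > 0"
  shows "(\<integral>\<^sup>+a. \<integral>\<^sup>+b. ennreal (gauss_flux l h a b * (a - b)\<^sup>2) \<partial>lborel \<partial>lborel) = ennreal (2 * h + h\<^sup>2 * l)"
proof -
  have inner: "(\<integral>\<^sup>+b. ennreal (gauss_flux l h a b * (a - b)\<^sup>2) \<partial>lborel)
      = ennreal (normal_density 0 (1 / sqrt l) a * (2 * h + (h * l)\<^sup>2 * a\<^sup>2))" for a
  proof -
    have "has_bochner_integral lborel (\<lambda>b. normal_density ((1 - h * l) * a) (sqrt (2 * h)) b * (a - b)\<^sup>2)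
        ((sqrt (2 * h))\<^sup>2 + ((1 - h * l) * a - a)\<^sup>2)"
      using h by (intro has_bochner_integral_normal_density_sq_dist) simp
    then have "has_bochner_integral lborel (\<lambda>b. gauss_flux l h a b * (a - b)\<^sup>2)
        (normal_density 0 (1 / sqrt l) a * (2 * h + (h * l)\<^sup>2 * a\<^sup>2))"
      unfolding gauss_flux_def mult.assoc using h
      by (intro has_bochner_integral_mult_right) (simp add: power2_eq_square algebra_simps)
    then show ?thesis
      by (simp add: nn_integral_eq_integral has_bochner_integral_iff gauss_flux_nonneg)
  qed
  have "has_bochner_integral lborel (\<lambda>a. normal_density 0 (1 / sqrt l) a * (2 * h + (h * l)\<^sup>2 * a\<^sup>2))
      (2 * h + (h * l)\<^sup>2 * (1 / sqrt l)\<^sup>2)"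
    using l by (intro has_bochner_integral_normal_density_centered_poly) simp
  moreover have "(h * l)\<^sup>2 * (1 / sqrt l)\<^sup>2 = h\<^sup>2 * l"
    using l by (simp add: power_divide power2_eq_square)
  ultimately show ?thesis
    unfolding inner using h by (simp add: nn_integral_eq_integral has_bochner_integral_iff)
qed

lemma nn_integral_gauss_flux:
  assumes l: "l > 0" and h: "h > 0"
  shows "(\<integral>\<^sup>+a. \<integral>\<^sup>+b. ennreal (gauss_flux l h a b) \<partial>lborel \<partial>lborel) = 1"
proof -
  have "(\<integral>\<^sup>+b. ennreal (gauss_flux l h a b) \<partial>lborel) = ennreal (normal_density 0 (1 / sqrt l) a)" for a
    unfolding gauss_flux_def using h
    by (simp add: ennreal_mult nn_integral_cmult nn_integral_normal_density)
  then show ?thesis using l by (simp add: nn_integral_normal_density)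
qed

lemma dirichlet_form_iso_coordinate:
  assumes l: "l > 0" and h: "h > 0" and d: "d > 0"
  shows "dirichlet_form (target d (iso_potential d l)) (mala_kernel d (iso_potential d l) (iso_gradient d l) h) (\<lambda>x. x 0)
    \<le> ennreal ((2 * h + h\<^sup>2 * l) / 2)"
proof -
  define F where "F = (\<lambda>i a b. gauss_flux l h a b * (if i = (0::nat) then (a - b)\<^sup>2 else 1))"
  have F0: "0 \<le> F i a b" for i a b
    unfolding F_def by (simp add: gauss_flux_nonneg)
  have "(\<Prod>i<d. gauss_flux l h (x i) (y i)) * mala_acc d (iso_potential d l) (iso_gradient d l) h x y * (x 0 - y 0)\<^sup>2
      \<le> (\<Prod>i<d. F i (x i) (y i))" for x y
  proof -
    have "(\<Prod>i<d. F i (x i) (y i)) = (\<Prod>i<d. gauss_flux l h (x i) (y i)) * (x 0 - y 0)\<^sup>2"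
      using d by (simp add: F_def prod.distrib)
    moreover have "(\<Prod>i<d. gauss_flux l h (x i) (y i)) * mala_acc d (iso_potential d l) (iso_gradient d l) h x y * (x 0 - y 0)\<^sup>2
        \<le> (\<Prod>i<d. gauss_flux l h (x i) (y i)) * 1 * (x 0 - y 0)\<^sup>2"
      by (intro mult_right_mono mult_left_mono mala_acc_le_one) (simp_all add: prod_nonneg gauss_flux_nonneg)
    ultimately show ?thesis by simp
  qed
  then have "dirichlet_form (target d (iso_potential d l)) (mala_kernel d (iso_potential d l) (iso_gradient d l) h) (\<lambda>x. x 0)
      \<le> (1/2) * (\<integral>\<^sup>+x. \<integral>\<^sup>+y. ennreal (\<Prod>i<d. F i (x i) (y i)) \<partial>leb d \<partial>leb d)"
    using d measurable_leb_component[of 0 d] by (intro dirichlet_form_iso_le[OF l h]) auto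
  also have "(\<integral>\<^sup>+x. \<integral>\<^sup>+y. ennreal (\<Prod>i<d. F i (x i) (y i)) \<partial>leb d \<partial>leb d)
      = (\<integral>\<^sup>+x. \<integral>\<^sup>+y. (\<Prod>i<d. ennreal (F i (x i) (y i))) \<partial>leb d \<partial>leb d)"
    using F0 by (simp add: prod_ennreal)
  also have "\<dots> = (\<Prod>i<d. \<integral>\<^sup>+a. \<integral>\<^sup>+b. ennreal (F i a b) \<partial>lborel \<partial>lborel)"
  proof (rule nn_integral_leb_prod2)
    fix i
    have "(\<lambda>p. ennreal (F i (fst p) (snd p))) \<in> borel_measurable (borel \<Otimes>\<^sub>M borel)"
      unfolding F_def by measurable
    then show "(\<lambda>(a, b). ennreal (F i a b)) \<in> borel_measurable borel"
      by (simp add: borel_prod case_prod_beta')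
  qed
  also have "\<dots> = (\<Prod>i<d. if i = 0 then ennreal (2 * h + h\<^sup>2 * l) else 1)"
    unfolding F_def using l h
    by (intro prod.cong) (simp_all add: nn_integral_gauss_flux_sq_dist nn_integral_gauss_flux)
  also have "\<dots> = ennreal (2 * h + h\<^sup>2 * l)"
    using d by simp
  also have "(1/2) * ennreal (2 * h + h\<^sup>2 * l) = ennreal ((2 * h + h\<^sup>2 * l) / 2)"
    using h l by (intro ennreal_half_mult) simp
  finally show ?thesis .
qed

lemma has_bochner_integral_iso_coordinate_weight:
  assumes d: "d > 0" and g: "has_bochner_integral lborel (\<lambda>z. normal_density 0 (1 / sqrt l) z * g z) c"
    and l: "l > 0"
  shows "has_bochner_integral (leb d) (\<lambda>x. (\<Prod>i<d. normal_density 0 (1 / sqrt l) (x i)) * g (x 0)) c"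
proof -
  let ?N = "normal_density 0 (1 / sqrt l)"
  have "has_bochner_integral (leb d) (\<lambda>x. \<Prod>i<d. (\<lambda>z. ?N z * (if i = 0 then g z else 1)) (x i))
      (\<Prod>i<d. if i = 0 then c else 1)"
    using g l by (intro has_bochner_integral_leb_prod) (simp add: has_bochner_integral_iff)
  moreover have "(\<Prod>i<d. ?N (x i) * (if i = 0 then g (x i) else 1)) = (\<Prod>i<d. ?N (x i)) * g (x 0)" for x
    using d by (simp add: prod.distrib)
  ultimately show ?thesis using d by simp
qed

lemma iso_coordinate_variance:
  assumes l: "l > 0" and d: "d > 0"
  shows "(\<lambda>x. x 0) \<in> L2 (target d (iso_potential d l))" "var (target d (iso_potential d l)) (\<lambda>x. x 0) = 1 / l"
proof -
  have s: "1 / sqrt l > 0" using l by simp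
  have m: "(\<lambda>x. x 0) \<in> borel_measurable (leb d)" "(\<lambda>x. (x 0)\<^sup>2) \<in> borel_measurable (leb d)"
    using measurable_leb_component[of 0 d] d by simp_all
  have "has_bochner_integral lborel (\<lambda>z. normal_density 0 (1 / sqrt l) z * z) 0"
    using normal_moment_odd[OF s, of 0 0] by simp
  note I1 = integral_iso_target[OF l m(1) has_bochner_integral_iso_coordinate_weight[OF d this l]]
  have "has_bochner_integral lborel (\<lambda>z. normal_density 0 (1 / sqrt l) z * z\<^sup>2) (1 / l)"
    using has_bochner_integral_normal_density_sq_dist[OF s, of 0 0] l by (simp add: power_divide)
  note I2 = integral_iso_target[OF l m(2) has_bochner_integral_iso_coordinate_weight[OF d this l]]
  show "(\<lambda>x. x 0) \<in> L2 (target d (iso_potential d l))"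
    unfolding L2_def using m I2(1) by (simp add: target_def)
  show "var (target d (iso_potential d l)) (\<lambda>x. x 0) = 1 / l"
    using var_eq_moments[OF prob_space_iso_target[OF l] I1(1) I2(1)] I1(2) I2(2) by simp
qed

lemma relaxation_time_iso_small_step:
  assumes l: "l > 0" and h: "h > 0" and d: "d > 0"
  shows "ennreal (2 / (l * (2 * h + h\<^sup>2 * l)))
    \<le> relaxation_time (target d (iso_potential d l)) (mala_kernel d (iso_potential d l) (iso_gradient d l) h)"
proof -
  have "ennreal (var (target d (iso_potential d l)) (\<lambda>x. x 0) / ((2 * h + h\<^sup>2 * l) / 2))
    \<le> relaxation_time (target d (iso_potential d l)) (mala_kernel d (iso_potential d l) (iso_gradient d l) h)"
    using l h d iso_coordinate_variance[OF l d]
    by (intro relaxation_time_ge_test_function prob_space_iso_target dirichlet_form_iso_coordinate)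
      (simp_all add: add_pos_nonneg)
  then show ?thesis
    using iso_coordinate_variance(2)[OF l d] by (simp add: field_simps)
qed

section \<open>Large steps: a Gaussian bump as test function\<close>

lemma iso_bump_variance:
  assumes l: "l > 0"
  shows "(\<lambda>x. exp (- (l * sqnorm d x))) \<in> L2 (target d (iso_potential d l))"
    "var (target d (iso_potential d l)) (\<lambda>x. exp (- (l * sqnorm d x))) = sqrt (1/5) ^ d - (1/3) ^ d"
proof -
  have m: "(\<lambda>x. exp (- (l * sqnorm d x))) \<in> borel_measurable (leb d)"
    "(\<lambda>x. (exp (- (l * sqnorm d x)))\<^sup>2) \<in> borel_measurable (leb d)" by measurable
  have moment: "has_bochner_integral (leb d) (\<lambda>x. (\<Prod>i<d. normal_density 0 (1 / sqrt l) (x i)) * exp (- (k * sqnorm d x)))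
      (sqrt (l / (l + 2 * k)) ^ d)" if k: "k \<ge> 0" for k
  proof -
    have "has_bochner_integral (leb d) (\<lambda>x. \<Prod>i<d. normal_density 0 (1 / sqrt l) (x i) * exp (- k * (x i)\<^sup>2))
        (\<Prod>i<d. sqrt (l / (l + 2 * k)))"
      using has_bochner_integral_normal_density_exp[OF l k] by (intro has_bochner_integral_leb_prod)
    then show ?thesis by (simp add: exp_neg_sqnorm prod.distrib)
  qed
  have sq: "(exp (- (l * sqnorm d x)))\<^sup>2 = exp (- ((2 * l) * sqnorm d x))" for x
    by (simp add: power2_eq_square exp_add[symmetric])
  have "l / (l + 2 * l) = 1/3" "l / (l + 2 * (2 * l)) = 1/5" using l by simp_all
  note I1 = integral_iso_target[OF l m(1) moment[of l, unfolded this(1)]]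
    and I2 = integral_iso_target[OF l m(2) moment[of "2 * l", unfolded this(2), folded sq]]
  show "(\<lambda>x. exp (- (l * sqnorm d x))) \<in> L2 (target d (iso_potential d l))"
    unfolding L2_def using m I2(1) l by (simp add: target_def)
  have "(sqrt (1/3) ^ d)\<^sup>2 = (1/3::real) ^ d"
    by (simp add: power_mult_distrib[symmetric] power_mult[symmetric] mult.commute[of d] power_mult)
  then show "var (target d (iso_potential d l)) (\<lambda>x. exp (- (l * sqnorm d x))) = sqrt (1/5) ^ d - (1/3) ^ d"
    using var_eq_moments[OF prob_space_iso_target[OF l] I1(1) I2(1)] I1(2) I2(2) l by simp
qed

lemma sqrt_gauss_flux_product:
  fixes l h a b :: real
  defines "\<alpha> \<equiv> l / 4 + (1 + (1 - h * l)\<^sup>2) / (8 * h)" and "\<delta> \<equiv> (1 - h * l) / (4 * h)"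
  assumes l: "l > 0" and h: "h > 0"
  shows "sqrt (gauss_flux l h a b * gauss_flux l h b a)
    = sqrt (l / (8 * h)) / pi * exp (- (\<alpha> * a\<^sup>2 + \<alpha> * b\<^sup>2 - 2 * \<delta> * a * b))"
proof -
  define K where "K = 1 / sqrt (2 * pi / l) * (1 / sqrt (4 * pi * h))"
  define E where "E = - (l / 2) * a\<^sup>2 + - (1 / (4 * h)) * (b - (1 - h * l) * a)\<^sup>2
    + (- (l / 2) * b\<^sup>2 + - (1 / (4 * h)) * (a - (1 - h * l) * b)\<^sup>2)"
  have F: "gauss_flux l h a b * gauss_flux l h b a = K\<^sup>2 * exp E"
    unfolding gauss_flux_def normal_density_centered[OF l] normal_density_mala_proposal[OF h] K_def E_def
    by (simp only: exp_add) (simp add: power2_eq_square)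
  have "K\<^sup>2 = 1 / (2 * pi / l) * (1 / (4 * pi * h))"
    unfolding K_def using l h by (simp add: power_mult_distrib power_divide)
  also have "\<dots> = (sqrt (l / (8 * h)) / pi)\<^sup>2"
    using l h by (simp add: power_divide power2_eq_square)
  finally have K2: "K\<^sup>2 = (sqrt (l / (8 * h)) / pi)\<^sup>2" .
  have E: "E = 2 * (- (\<alpha> * a\<^sup>2 + \<alpha> * b\<^sup>2 - 2 * \<delta> * a * b))"
    unfolding E_def \<alpha>_def \<delta>_def using h by (simp add: field_simps power2_eq_square)
  from F have P: "gauss_flux l h a b * gauss_flux l h b a
      = (sqrt (l / (8 * h)) / pi)\<^sup>2 * exp (2 * (- (\<alpha> * a\<^sup>2 + \<alpha> * b\<^sup>2 - 2 * \<delta> * a * b)))"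
    by (simp only: K2 E)
  have "sqrt ((sqrt (l / (8 * h)) / pi)\<^sup>2 * exp (2 * Y)) = sqrt (l / (8 * h)) / pi * exp Y" for Y
  proof -
    have "(sqrt (l / (8 * h)) / pi)\<^sup>2 * exp (2 * Y) = (sqrt (l / (8 * h)) / pi * exp Y)\<^sup>2"
      by (simp add: power2_eq_square exp_add[symmetric] algebra_simps)
    then show ?thesis using l h by simp
  qed
  from this[of "- (\<alpha> * a\<^sup>2 + \<alpha> * b\<^sup>2 - 2 * \<delta> * a * b)"] show ?thesis
    unfolding P .
qed

lemma gauss_flux_exponent_det_ge:
  fixes l h s t :: real
  defines "\<alpha> \<equiv> l / 4 + (1 + (1 - h * l)\<^sup>2) / (8 * h)" and "\<delta> \<equiv> (1 - h * l) / (4 * h)"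
  assumes l: "l > 0" and h: "h > 0" and st: "s \<ge> 0" "t \<ge> 0" "2 * l \<le> s + t"
  shows "l * (5 + 2 * (h * l)\<^sup>2) / (8 * h) \<le> (\<alpha> + s) * (\<alpha> + t) - \<delta>\<^sup>2"
proof -
  have \<alpha>: "\<alpha> \<ge> 0" unfolding \<alpha>_def using l h by simp
  have "(\<alpha> + 2 * l) * \<alpha> - \<delta>\<^sup>2 = l * (5 + 2 * (h * l)\<^sup>2) / (8 * h) + h\<^sup>2 * l ^ 4 / 64"
    unfolding \<alpha>_def \<delta>_def using h
    by (simp add: field_simps power2_eq_square) (simp add: algebra_simps power4_eq_xxxx)
  moreover have "(\<alpha> + 2 * l) * \<alpha> \<le> (\<alpha> + s) * (\<alpha> + t)"
  proof -
    have "\<alpha> * (2 * l) \<le> \<alpha> * (s + t)" using \<alpha> st by (intro mult_left_mono) auto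
    moreover have "0 \<le> s * t" using st by simp
    ultimately show ?thesis by (simp add: algebra_simps)
  qed
  moreover have "0 \<le> h\<^sup>2 * l ^ 4 / 64" by simp
  ultimately show ?thesis by linarith
qed

definition damped_flux_mean :: "real \<Rightarrow> real \<Rightarrow> real \<Rightarrow> real \<Rightarrow> real \<Rightarrow> real \<Rightarrow> real" where
  "damped_flux_mean l h s t a b = exp (- (s * a\<^sup>2 + t * b\<^sup>2)) * sqrt (gauss_flux l h a b * gauss_flux l h b a)"

lemma damped_flux_mean_nonneg: "0 \<le> damped_flux_mean l h s t a b"
  unfolding damped_flux_mean_def by (simp add: gauss_flux_nonneg)

lemma borel_measurable_damped_flux_mean:
  "(\<lambda>(a, b). ennreal (damped_flux_mean l h s t a b)) \<in> borel_measurable borel"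
proof -
  have "(\<lambda>p. ennreal (damped_flux_mean l h s t (fst p) (snd p))) \<in> borel_measurable (borel \<Otimes>\<^sub>M borel)"
    unfolding damped_flux_mean_def by measurable
  then show ?thesis by (simp add: borel_prod case_prod_beta')
qed

lemma nn_integral_damped_flux_mean_le:
  assumes l: "l > 0" and h: "h > 0" and st: "s \<ge> 0" "t \<ge> 0" "2 * l \<le> s + t"
  shows "(\<integral>\<^sup>+a. \<integral>\<^sup>+b. ennreal (damped_flux_mean l h s t a b) \<partial>lborel \<partial>lborel)
    \<le> ennreal (1 / sqrt (5 + 2 * (h * l)\<^sup>2))"
proof -
  define \<alpha> where "\<alpha> = l / 4 + (1 + (1 - h * l)\<^sup>2) / (8 * h)"
  define \<delta> where "\<delta> = (1 - h * l) / (4 * h)"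
  define K where "K = sqrt (l / (8 * h)) / pi"
  define D where "D = (\<alpha> + s) * (\<alpha> + t) - \<delta>\<^sup>2"
  have D: "l * (5 + 2 * (h * l)\<^sup>2) / (8 * h) \<le> D"
    unfolding D_def \<alpha>_def \<delta>_def by (rule gauss_flux_exponent_det_ge[OF l h st])
  have "0 < l * (5 + 2 * (h * l)\<^sup>2) / (8 * h)" using l h by (simp add: add_pos_nonneg)
  with D have D0: "D > 0" by linarith
  have \<alpha>: "\<alpha> > 0" unfolding \<alpha>_def using l h by (simp add: add_pos_nonneg)
  have "damped_flux_mean l h s t a b = K * exp (- ((\<alpha> + s) * a\<^sup>2 + (\<alpha> + t) * b\<^sup>2 - 2 * \<delta> * a * b))" for a b
    unfolding damped_flux_mean_def sqrt_gauss_flux_product[OF l h] \<alpha>_def[symmetric] \<delta>_def[symmetric] K_def[symmetric]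
    by (simp add: exp_add[symmetric] algebra_simps)
  then have "(\<integral>\<^sup>+a. \<integral>\<^sup>+b. ennreal (damped_flux_mean l h s t a b) \<partial>lborel \<partial>lborel)
      = ennreal (K * pi / sqrt D)"
    using \<alpha> st D0 l h unfolding D_def K_def
    by (simp only:) (intro nn_integral_exp_quadratic_form, auto simp: add_pos_nonneg)
  also have "\<dots> \<le> ennreal (1 / sqrt (5 + 2 * (h * l)\<^sup>2))"
  proof (rule ennreal_leI)
    have "(K * pi)\<^sup>2 * (5 + 2 * (h * l)\<^sup>2) \<le> D"
      using D l h unfolding K_def by (simp add: power_divide)
    then have "K * pi \<le> sqrt (D / (5 + 2 * (h * l)\<^sup>2))"
      by (intro real_le_rsqrt) (simp add: field_simps add_pos_nonneg)
    then show "K * pi / sqrt D \<le> 1 / sqrt (5 + 2 * (h * l)\<^sup>2)"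
      using D0 by (simp add: real_sqrt_divide divide_right_mono field_simps)
  qed
  finally show ?thesis .
qed

lemma nn_integral_leb_damped_flux_mean_le:
  assumes l: "l > 0" and h: "h > 0" and st: "s \<ge> 0" "t \<ge> 0" "2 * l \<le> s + t"
  shows "(\<integral>\<^sup>+x. \<integral>\<^sup>+y. (\<Prod>i<d. ennreal (damped_flux_mean l h s t (x i) (y i))) \<partial>leb d \<partial>leb d)
    \<le> ennreal ((1 / sqrt (5 + 2 * (h * l)\<^sup>2)) ^ d)"
proof -
  have "(\<Prod>i<d. \<integral>\<^sup>+a. \<integral>\<^sup>+b. ennreal (damped_flux_mean l h s t a b) \<partial>lborel \<partial>lborel)
      \<le> (\<Prod>i<d. ennreal (1 / sqrt (5 + 2 * (h * l)\<^sup>2)))"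
    using nn_integral_damped_flux_mean_le[OF l h st] by (intro prod_mono_ennreal)
  then show ?thesis
    by (simp add: nn_integral_leb_prod2[OF borel_measurable_damped_flux_mean] ennreal_power)
qed

text \<open>Since the bump \<open>\<phi>\<close> is positive, \<open>(\<phi> x - \<phi> y)\<^sup>2 \<le> \<phi>(x)\<^sup>2 + \<phi>(y)\<^sup>2\<close>, and \<open>\<phi>\<^sup>2\<close>
  factorises over the coordinates like the flux bound.\<close>

lemma iso_bump_flux_le:
  assumes l: "l > 0" and h: "h > 0"
  shows "(\<Prod>i<d. gauss_flux l h (x i) (y i)) * mala_acc d (iso_potential d l) (iso_gradient d l) h x y
      * (exp (- (l * sqnorm d x)) - exp (- (l * sqnorm d y)))\<^sup>2
    \<le> (\<Prod>i<d. damped_flux_mean l h (2 * l) 0 (x i) (y i)) + (\<Prod>i<d. damped_flux_mean l h 0 (2 * l) (x i) (y i))"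
proof -
  define \<phi> where "\<phi> = (\<lambda>x. exp (- (l * sqnorm d x)))"
  define S where "S = (\<Prod>i<d. sqrt (gauss_flux l h (x i) (y i) * gauss_flux l h (y i) (x i)))"
  have \<phi>_sq: "(\<phi> z)\<^sup>2 = (\<Prod>i<d. exp (- (2 * l) * (z i)\<^sup>2))" for z
  proof -
    have "(\<phi> z)\<^sup>2 = exp (- (2 * l * sqnorm d z))"
      unfolding \<phi>_def by (simp add: power2_eq_square exp_add[symmetric])
    then show ?thesis by (simp only: exp_neg_sqnorm)
  qed
  have "0 \<le> 2 * \<phi> x * \<phi> y" unfolding \<phi>_def by simp
  then have "(\<phi> x - \<phi> y)\<^sup>2 \<le> (\<phi> x)\<^sup>2 + (\<phi> y)\<^sup>2"
    by (simp add: power2_diff)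
  then have "(\<Prod>i<d. gauss_flux l h (x i) (y i)) * mala_acc d (iso_potential d l) (iso_gradient d l) h x y * (\<phi> x - \<phi> y)\<^sup>2
    \<le> S * ((\<phi> x)\<^sup>2 + (\<phi> y)\<^sup>2)"
    unfolding S_def
    by (intro mult_mono iso_flux_acc_le_sqrt[OF l h])
      (simp_all add: prod_nonneg gauss_flux_nonneg mala_acc_nonneg)
  also have "\<dots> = S * (\<phi> x)\<^sup>2 + S * (\<phi> y)\<^sup>2"
    by (rule distrib_left)
  also have "S * (\<phi> x)\<^sup>2 = (\<Prod>i<d. damped_flux_mean l h (2 * l) 0 (x i) (y i))"
    unfolding S_def \<phi>_sq prod.distrib[symmetric] damped_flux_mean_def by (intro prod.cong) simp_all
  also have "S * (\<phi> y)\<^sup>2 = (\<Prod>i<d. damped_flux_mean l h 0 (2 * l) (x i) (y i))"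
    unfolding S_def \<phi>_sq prod.distrib[symmetric] damped_flux_mean_def by (intro prod.cong) (simp_all add: mult_ac)
  finally show ?thesis unfolding \<phi>_def .
qed

lemma dirichlet_form_iso_bump:
  assumes l: "l > 0" and h: "h > 0"
  shows "dirichlet_form (target d (iso_potential d l)) (mala_kernel d (iso_potential d l) (iso_gradient d l) h)
      (\<lambda>x. exp (- (l * sqnorm d x))) \<le> ennreal ((1 / sqrt (5 + 2 * (h * l)\<^sup>2)) ^ d)"
proof -
  define \<rho> where "\<rho> = (1 / sqrt (5 + 2 * (h * l)\<^sup>2)) ^ d"
  define W where "W = damped_flux_mean l h"
  have \<rho>0: "0 \<le> \<rho>" unfolding \<rho>_def by simp
  have split: "ennreal ((\<Prod>i<d. W (2 * l) 0 (x i) (y i)) + (\<Prod>i<d. W 0 (2 * l) (x i) (y i)))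
      = (\<Prod>i<d. ennreal (W (2 * l) 0 (x i) (y i))) + (\<Prod>i<d. ennreal (W 0 (2 * l) (x i) (y i)))" for x y
    unfolding W_def by (simp add: prod_nonneg prod_ennreal damped_flux_mean_nonneg)
  have measurable: "(\<lambda>(x, y). \<Prod>i<d. ennreal (W s t (x i) (y i))) \<in> borel_measurable (leb d \<Otimes>\<^sub>M leb d)" for s t
    unfolding W_def by (rule borel_measurable_leb_prod2) (rule borel_measurable_damped_flux_mean)
  have "dirichlet_form (target d (iso_potential d l)) (mala_kernel d (iso_potential d l) (iso_gradient d l) h)
      (\<lambda>x. exp (- (l * sqnorm d x)))
    \<le> (1/2) * (\<integral>\<^sup>+x. \<integral>\<^sup>+y. ennreal ((\<Prod>i<d. W (2 * l) 0 (x i) (y i)) + (\<Prod>i<d. W 0 (2 * l) (x i) (y i))) \<partial>leb d \<partial>leb d)"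
    unfolding W_def using iso_bump_flux_le[OF l h] by (intro dirichlet_form_iso_le[OF l h]) simp_all
  also have "(\<integral>\<^sup>+x. \<integral>\<^sup>+y. ennreal ((\<Prod>i<d. W (2 * l) 0 (x i) (y i)) + (\<Prod>i<d. W 0 (2 * l) (x i) (y i))) \<partial>leb d \<partial>leb d)
    = (\<integral>\<^sup>+x. \<integral>\<^sup>+y. (\<Prod>i<d. ennreal (W (2 * l) 0 (x i) (y i))) \<partial>leb d \<partial>leb d)
      + (\<integral>\<^sup>+x. \<integral>\<^sup>+y. (\<Prod>i<d. ennreal (W 0 (2 * l) (x i) (y i))) \<partial>leb d \<partial>leb d)"
    unfolding split by (rule nn_integral_leb_iterated_add[OF measurable measurable])
  also have "\<dots> \<le> ennreal \<rho> + ennreal \<rho>"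
    unfolding W_def \<rho>_def using l h by (intro add_mono nn_integral_leb_damped_flux_mean_le) auto
  also have "\<dots> = ennreal (\<rho> + \<rho>)"
    using \<rho>0 by (intro ennreal_plus[symmetric]) simp_all
  also have "(1/2) * ennreal (\<rho> + \<rho>) = ennreal \<rho>"
    using ennreal_half_mult[of "\<rho> + \<rho>"] \<rho>0 by simp
  finally show ?thesis
    unfolding \<rho>_def by (simp add: mult_left_mono)
qed

lemma bump_variance_lower_bound:
  assumes d: "d > 0"
  shows "sqrt (1/5) ^ d / 4 \<le> sqrt (1/5) ^ d - (1/3::real) ^ d"
proof -
  have "sqrt 5 \<le> sqrt ((9/4::real)\<^sup>2)"
    by (rule real_sqrt_le_mono) (simp add: power2_eq_square)
  then have r: "sqrt 5 / 3 \<le> 3/4" by simp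
  have "(1/3::real) ^ d = sqrt (1/5) ^ d * (sqrt 5 / 3) ^ d"
    by (simp add: power_mult_distrib[symmetric] real_sqrt_divide)
  also have "\<dots> \<le> sqrt (1/5) ^ d * (3/4)"
    using power_decreasing[of 1 d "sqrt 5 / 3"] r d by (intro mult_left_mono) auto
  finally show ?thesis by simp
qed

lemma relaxation_time_iso_large_step:
  assumes l: "l > 0" and h: "h > 0" and d: "d > 0"
  shows "ennreal (sqrt (1 + 2 * (h * l)\<^sup>2 / 5) ^ d / 4)
    \<le> relaxation_time (target d (iso_potential d l)) (mala_kernel d (iso_potential d l) (iso_gradient d l) h)"
proof -
  define v where "v = sqrt (1/5) ^ d - (1/3::real) ^ d"
  define \<rho> where "\<rho> = 1 / sqrt (5 + 2 * (h * l)\<^sup>2)"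
  have \<rho>: "\<rho> > 0" unfolding \<rho>_def by (simp add: add_pos_nonneg)
  have v: "sqrt (1/5) ^ d / 4 \<le> v"
    unfolding v_def by (rule bump_variance_lower_bound[OF d])
  moreover have "0 < sqrt (1/5) ^ d / (4::real)" by simp
  ultimately have v0: "v > 0" by linarith
  have "ennreal (var (target d (iso_potential d l)) (\<lambda>x. exp (- (l * sqnorm d x))) / \<rho> ^ d)
    \<le> relaxation_time (target d (iso_potential d l)) (mala_kernel d (iso_potential d l) (iso_gradient d l) h)"
    using iso_bump_variance(2)[OF l, of d] v0 \<rho> dirichlet_form_iso_bump[OF l h, of d]
    by (intro relaxation_time_ge_test_function prob_space_iso_target iso_bump_variance(1) l)
      (simp_all add: v_def \<rho>_def)
  then have "ennreal (v / \<rho> ^ d)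
    \<le> relaxation_time (target d (iso_potential d l)) (mala_kernel d (iso_potential d l) (iso_gradient d l) h)"
    unfolding iso_bump_variance(2)[OF l] v_def .
  moreover have "sqrt (1 + 2 * (h * l)\<^sup>2 / 5) ^ d / 4 \<le> v / \<rho> ^ d"
  proof -
    have "sqrt (1 + 2 * (h * l)\<^sup>2 / 5) = sqrt (1/5) / \<rho>"
      unfolding \<rho>_def by (simp add: real_sqrt_mult[symmetric] add_divide_distrib)
    then have "sqrt (1 + 2 * (h * l)\<^sup>2 / 5) ^ d / 4 = (sqrt (1/5) ^ d / 4) / \<rho> ^ d"
      by (simp add: power_divide)
    moreover have "(sqrt (1/5) ^ d / 4) / \<rho> ^ d \<le> v / \<rho> ^ d"
      using v \<rho> by (intro divide_right_mono) simp_all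
    ultimately show ?thesis by simp
  qed
  ultimately show ?thesis
    by (meson ennreal_leI order.trans)
qed

section \<open>Choosing the regime\<close>

lemma sqrt_ge_100: "real d \<ge> 10000 \<Longrightarrow> sqrt (real d) \<ge> 100"
  using real_sqrt_le_mono[of "100\<^sup>2" "real d"] by simp

lemma ten_ln_le_mult_ln_one_plus:
  fixes d :: nat
  assumes d: "real d \<ge> 10000" and z: "z \<ge> 0" and zd: "1440 * ln (real d) \<le> z * real d"
  shows "10 * ln (real d) \<le> real d * ln (1 + z)"
proof (cases "z \<ge> 1/2")
  case True
  have "1/2 - (1/2)\<^sup>2 \<le> ln (1 + (1/2::real))"
    by (rule ln_one_plus_pos_lower_bound) auto
  also have "\<dots> \<le> ln (1 + z)" using True by simp
  finally have "1/4 \<le> ln (1 + z)" by (simp add: power2_eq_square)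
  moreover have "10 * ln (real d) \<le> real d / 4"
  proof -
    have "80 * sqrt (real d) \<le> sqrt (real d) * sqrt (real d)"
      using sqrt_ge_100[OF d] by (intro mult_right_mono) auto
    then show ?thesis using ln_le_two_sqrt[of "real d"] d by simp
  qed
  moreover have "real d * (1/4) \<le> real d * ln (1 + z)"
    using calculation(1) by (intro mult_left_mono) auto
  ultimately show ?thesis by simp
next
  case False
  have "z - z\<^sup>2 \<le> ln (1 + z)" using z False by (intro ln_one_plus_pos_lower_bound) auto
  moreover have "z * z \<le> (1/2) * z" using z False by (intro mult_right_mono) auto
  ultimately have "z / 2 \<le> ln (1 + z)" by (simp add: power2_eq_square)
  then have "real d * (z / 2) \<le> real d * ln (1 + z)" by (intro mult_left_mono) auto
  moreover have "0 \<le> ln (real d)" using d by simp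
  ultimately show ?thesis using zd by (simp add: mult.commute)
qed

lemma power_ten_le_one_plus_power:
  fixes d :: nat
  assumes d: "real d \<ge> 10000" and z: "z \<ge> 0" and zd: "1440 * ln (real d) \<le> z * real d"
  shows "real d ^ 10 \<le> (1 + z) ^ d"
proof -
  have "real d ^ 10 = exp (ln (real d ^ 10))"
    using d by simp
  also have "\<dots> = exp (10 * ln (real d))"
    using d by (simp add: ln_realpow)
  also have "\<dots> \<le> exp (real d * ln (1 + z))"
    using ten_ln_le_mult_ln_one_plus[OF d z zd] by simp
  also have "\<dots> = (1 + z) ^ d"
    using z by (simp add: ln_realpow[symmetric])
  finally show ?thesis .
qed

lemma small_step_regime:
  fixes d :: nat
  assumes d: "real d \<ge> 10000" and \<kappa>: "10 \<le> \<kappa>" and h: "0 < h"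
    and small: "h \<le> 60 * sqrt (ln (real d)) / (\<kappa> * sqrt (real d))"
  shows "1/100 * \<kappa> * sqrt (real d) / sqrt (ln (real d)) \<le> 2 / (1 * (2 * h + h\<^sup>2 * 1))"
proof -
  define L where "L = ln (real d)"
  define B where "B = 1/100 * \<kappa> * sqrt (real d) / sqrt L"
  have L: "1 \<le> L" unfolding L_def using d exp_le by (subst ln_ge_iff) auto
  then have sL: "1 \<le> sqrt L" by simp
  have sd: "100 \<le> sqrt (real d)" using sqrt_ge_100[OF d] .
  have "36 * L \<le> real d"
  proof -
    have "72 * sqrt (real d) \<le> sqrt (real d) * sqrt (real d)"
      using sd by (intro mult_right_mono) auto
    then show ?thesis using ln_le_two_sqrt[of "real d"] d unfolding L_def by simp
  qed
  then have "6 * sqrt L \<le> sqrt (real d)"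
    using real_sqrt_le_mono[of "36 * L" "real d"] by (simp add: real_sqrt_mult)
  then have "60 * sqrt L \<le> \<kappa> * sqrt (real d)"
    using \<kappa> mult_right_mono[OF \<kappa>, of "sqrt (real d)"] by simp
  moreover have ksd: "0 < \<kappa> * sqrt (real d)" using \<kappa> sd by (intro mult_pos_pos) linarith+
  ultimately have "60 * sqrt L / (\<kappa> * sqrt (real d)) \<le> 1" by simp
  then have "h \<le> 1"
    using small unfolding L_def by linarith
  then have "2 * h + h\<^sup>2 \<le> 3 * h"
    using h by (simp add: power2_eq_square mult_left_le)
  have B: "0 < B" unfolding B_def using \<kappa> sd sL by (intro divide_pos_pos mult_pos_pos) linarith+
  have "B * h \<le> B * (60 * sqrt L / (\<kappa> * sqrt (real d)))"
    using small B unfolding L_def by (intro mult_left_mono) auto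
  also have "\<dots> = 3/5"
    unfolding B_def using \<kappa> sd sL d by (simp add: field_simps)
  finally have Bh: "B * h \<le> 3/5" .
  have "B * (2 * h + h\<^sup>2) \<le> B * (3 * h)"
    using \<open>2 * h + h\<^sup>2 \<le> 3 * h\<close> B by (intro mult_left_mono) auto
  also have "\<dots> = 3 * (B * h)" by simp
  finally have "B * (2 * h + h\<^sup>2) \<le> 2" using Bh by linarith
  then show ?thesis
    using B h unfolding B_def L_def by (simp add: le_divide_eq add_pos_pos mult.commute)
qed

lemma large_step_regime:
  fixes d :: nat
  assumes d: "real d \<ge> 10000" and \<kappa>: "0 < \<kappa>" "\<kappa> \<le> real d ^ 4"
    and large: "60 * sqrt (ln (real d)) / (\<kappa> * sqrt (real d)) < h"
  shows "1/100 * \<kappa> * sqrt (real d) / sqrt (ln (real d)) \<le> sqrt (1 + 2 * (h * \<kappa>)\<^sup>2 / 5) ^ d / 4"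
proof -
  define L where "L = ln (real d)"
  define z where "z = 2 * (h * \<kappa>)\<^sup>2 / 5"
  have L: "1 \<le> L" unfolding L_def using d exp_le by (subst ln_ge_iff) auto
  then have sL: "1 \<le> sqrt L" by simp
  have sd: "100 \<le> sqrt (real d)" using sqrt_ge_100[OF d] .
  have "0 < \<kappa> * sqrt (real d)" using \<kappa> sd by (intro mult_pos_pos) linarith+
  then have "60 * sqrt L < h * (\<kappa> * sqrt (real d))"
    using large unfolding L_def[symmetric] by (simp add: divide_less_eq)
  then have "60 * sqrt L < h * \<kappa> * sqrt (real d)"
    by (simp add: mult.assoc)
  then have "(60 * sqrt L)\<^sup>2 < (h * \<kappa> * sqrt (real d))\<^sup>2"
    using L by (intro power_strict_mono) auto
  then have "1440 * ln (real d) \<le> z * real d"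
    using L unfolding z_def L_def by (simp add: power_mult_distrib mult_ac)
  moreover have "0 \<le> z" unfolding z_def by simp
  ultimately have "real d ^ 10 \<le> (1 + z) ^ d"
    using power_ten_le_one_plus_power[OF d] by blast
  then have "sqrt (real d ^ 10) \<le> sqrt ((1 + z) ^ d)"
    by (rule real_sqrt_le_mono)
  then have d5: "real d ^ 5 \<le> sqrt (1 + z) ^ d"
    by (simp add: real_sqrt_power[symmetric] power_mult[symmetric] real_sqrt_abs[of "real d ^ 5", simplified power_mult[symmetric], simplified])
  have "1/100 * \<kappa> * sqrt (real d) / sqrt L \<le> 1/100 * \<kappa> * sqrt (real d) / 1"
    using sL \<kappa> by (intro divide_left_mono) auto
  also have "\<dots> \<le> 1/100 * real d ^ 4 * real d"
  proof -
    have "sqrt (real d) \<le> real d"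
      using real_sqrt_le_mono[of "real d" "real d * real d"] d by simp
    then show ?thesis using \<kappa> by (simp add: mult_mono)
  qed
  also have "\<dots> \<le> real d ^ 5 / 4"
    by (simp add: power_Suc2[of _ 4, symmetric] del: power_Suc)
  finally show ?thesis
    using d5 unfolding z_def L_def by simp
qed

lemma mala_iso_relaxation_time_ge:
  fixes d :: nat
  assumes d: "real d \<ge> 10000" and \<kappa>: "10 \<le> \<kappa>" "\<kappa> \<le> real d ^ 4" and h: "0 < h"
  shows "\<exists>l. 1 \<le> l \<and> l \<le> \<kappa> \<and> ennreal (1/100 * \<kappa> * sqrt (real d) / sqrt (ln (real d)))
    \<le> relaxation_time (target d (iso_potential d l)) (mala_kernel d (iso_potential d l) (iso_gradient d l) h)"
proof (cases "h \<le> 60 * sqrt (ln (real d)) / (\<kappa> * sqrt (real d))")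
  case True
  have "ennreal (1/100 * \<kappa> * sqrt (real d) / sqrt (ln (real d))) \<le> ennreal (2 / (1 * (2 * h + h\<^sup>2 * 1)))"
    using small_step_regime[OF d \<kappa>(1) h True] by (rule ennreal_leI)
  also have "\<dots> \<le> relaxation_time (target d (iso_potential d 1)) (mala_kernel d (iso_potential d 1) (iso_gradient d 1) h)"
    using d h by (intro relaxation_time_iso_small_step) auto
  finally show ?thesis using \<kappa> by (intro exI[of _ 1]) simp
next
  case False
  have "ennreal (1/100 * \<kappa> * sqrt (real d) / sqrt (ln (real d))) \<le> ennreal (sqrt (1 + 2 * (h * \<kappa>)\<^sup>2 / 5) ^ d / 4)"
    using large_step_regime[OF d _ \<kappa>(2)] False \<kappa>(1) by (intro ennreal_leI) simp
  also have "\<dots> \<le> relaxation_time (target d (iso_potential d \<kappa>)) (mala_kernel d (iso_potential d \<kappa>) (iso_gradient d \<kappa>) h)"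
    using d h \<kappa> by (intro relaxation_time_iso_large_step) auto
  finally show ?thesis using \<kappa> by (intro exI[of _ \<kappa>]) simp
qed

theorem theorem1:
  "\<exists>c::real. c > 0 \<and> (\<exists>d0::nat. \<forall>d::nat. \<forall>\<kappa>::real. \<forall>h::real.
     d \<ge> d0 \<longrightarrow> 10 \<le> \<kappa> \<longrightarrow> \<kappa> \<le> real d ^ 4 \<longrightarrow> h > 0 \<longrightarrow>
     (\<exists>(A :: nat \<Rightarrow> nat \<Rightarrow> real) (b :: nat \<Rightarrow> real).
        (\<forall>i<d. \<forall>j<d. A i j = A j i) \<and>
        (\<forall>v. sqnorm d v \<le> (\<Sum>i<d. \<Sum>j<d. A i j * v i * v j)) \<and>
        (\<forall>v. (\<Sum>i<d. \<Sum>j<d. A i j * v i * v j) \<le> \<kappa> * sqnorm d v) \<and>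
        relaxation_time (target d (quad d A b))
          (mala_kernel d (quad d A b) (quad_grad d A b) h)
        \<ge> ennreal (c * \<kappa> * sqrt (real d) / sqrt (ln (real d)))))"
proof (intro exI[of _ "1/100"] conjI exI[of _ 10000] allI impI)
  fix d :: nat and \<kappa> h :: real
  assume "10000 \<le> d" "10 \<le> \<kappa>" "\<kappa> \<le> real d ^ 4" "0 < h"
  then obtain l where l: "1 \<le> l" "l \<le> \<kappa>" and relax:
    "ennreal (1/100 * \<kappa> * sqrt (real d) / sqrt (ln (real d)))
      \<le> relaxation_time (target d (iso_potential d l)) (mala_kernel d (iso_potential d l) (iso_gradient d l) h)"
    using mala_iso_relaxation_time_ge[of d \<kappa> h] by auto
  have "sqnorm d v \<le> l * sqnorm d v" "l * sqnorm d v \<le> \<kappa> * sqnorm d v" for v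
    using l sqnorm_nonneg[of d v] by (simp_all add: mult_right_mono mult_le_cancel_right1)
  with relax show "\<exists>A b. (\<forall>i<d. \<forall>j<d. A i j = A j i) \<and>
      (\<forall>v. sqnorm d v \<le> (\<Sum>i<d. \<Sum>j<d. A i j * v i * v j)) \<and>
      (\<forall>v. (\<Sum>i<d. \<Sum>j<d. A i j * v i * v j) \<le> \<kappa> * sqnorm d v) \<and>
      ennreal (1/100 * \<kappa> * sqrt (real d) / sqrt (ln (real d)))
        \<le> relaxation_time (target d (quad d A b)) (mala_kernel d (quad d A b) (quad_grad d A b) h)"
    by (intro exI[of _ "scalar_matrix l"] exI[of _ "\<lambda>_. 0"])
      (simp add: scalar_matrix_symmetric quadratic_form_scalar_matrix)
qed (simp)

end
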